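(* Let $K$ be a perfect field, $n=2$, and let $X=V_+(F)\subset\mathbb{P}(V)\cong\mathbb{P}^2_K$ be a plane curve of degree $d\ge3$ which is unstable (i.e. not semistable). (i) At least one of the following holds: (a) $X$ contains a line $L$ with multiplicity $m>d/3$; (b) $X$ contains a $K$-rational point $P$ of multiplicity $m>2d/3$; (c) $X$ contains a line $L=V_+(\ell)$ with multiplicity $m>0$, and writing $F=\ell^mG$ with $\ell\nmid G$ and $Y=V_+(G)$, the curves $L$ and $Y$ meet in a $K$-rational point $P$ with intersection multiplicity $>(d-m)/2$; (d) $X$ contains a $K$-rational point $P$ of multiplicity $m>d/2$ such that the tangent cone of $X$ at $P$ contains a line $L$ with multiplicity $>m/2$. (ii) If (a) holds for a line $L$ and $\mathcal{E}=(x_0,x_1,x_2)$ is any coordinate system with $L=V_+(x_0)$, then $(\mathcal{E},(2,-1,-1))$ is an instability for $X$. (iii) If (b) holds for a point $P$ and $\mathcal{E}=(x_0,x_1,x_2)$ is any coordinate system with $\{P\}=V_+(x_0,x_1)$, then $(\mathcal{E},(1,1,-2))$ is an instability for $X$. (iv) If (a) and (b) both fail, then there is a unique pair $(L,P)$ consisting of a line $L$ and a $K$-rational point $P\in L$ such that: (c) or (d) holds for $(L,P)$, and for every coordinate system $\mathcal{E}=(x_0,x_1,x_2)$ with $L=V_+(x_0)$ and $\{P\}=V_+(x_0,x_1)$ there exists a balanced ordered weight vector $w$ for which $(\mathcal{E},w)$ is an instability for $X$.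
   Context: $V$ is a 3-dimensional $K$-vector space, $\mathbb{P}(V)=\mathrm{Proj}\,K[V]$, $F\in K[V]_d$ nonzero. A coordinate system is a basis $\mathcal{E}=(x_0,x_1,x_2)$ of $V^*$. Writing $F=\sum_i a_ix_0^{i_0}x_1^{i_1}x_2^{i_2}$ ($i_0+i_1+i_2=d$), let $I_{F,\mathcal{E}}=\{i:a_i\ne0\}$ and $\langle i,w\rangle=\sum_j i_jw_j$. A weight vector $w\in\mathbb{Z}^3$ is balanced if $w_0+w_1+w_2=0$ and ordered if $w_0\ge w_1\ge w_2$. A pair $(\mathcal{E},w)$ with $w$ balanced and ordered is an instability for $X$ if $\langle i,w\rangle>0$ for all $i\in I_{F,\mathcal{E}}$. $X$ is semistable iff no instability exists (Hilbert–Mumford–Kempf numerical criterion for the action of $\mathrm{SL}(V)$ on forms; unstable means not semistable). *)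

theory Defs
  imports "HOL-Library.Poly_Mapping" "HOL-Computational_Algebra.Polynomial"
begin

text \<open>We fix V = K^3 with standard dual basis X0, X1, X2. The polynomial ring K[V] is
 represented as (nat =>0 nat) =>0 'k (finitely supported coefficient functions on monomials);
 only the variables 0,1,2 are used. Vectors of V (points) and of V* (linear forms) are
 triples.\<close>

type_synonym 'k mpoly = "(nat \<Rightarrow>\<^sub>0 nat) \<Rightarrow>\<^sub>0 'k"
type_synonym 'k vec3 = "'k \<times> 'k \<times> 'k"

definition Var :: "nat \<Rightarrow> 'k::comm_ring_1 mpoly" where
  "Var j = Poly_Mapping.single (Poly_Mapping.single j 1) 1"

definition Const :: "'k::comm_ring_1 \<Rightarrow> 'k mpoly" where
  "Const c = Poly_Mapping.single 0 c"

definition comp :: "'k vec3 \<Rightarrow> nat \<Rightarrow> 'k" where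
  "comp v j = (case v of (a, b, c) \<Rightarrow> (if j = 0 then a else if j = 1 then b else c))"

definition dot :: "'k::comm_ring_1 vec3 \<Rightarrow> 'k vec3 \<Rightarrow> 'k" where
  "dot u v = comp u 0 * comp v 0 + comp u 1 * comp v 1 + comp u 2 * comp v 2"

definition lin :: "'k::comm_ring_1 vec3 \<Rightarrow> 'k mpoly" where
  "lin c = Const (comp c 0) * Var 0 + Const (comp c 1) * Var 1 + Const (comp c 2) * Var 2"

definition proportional :: "'k::field vec3 \<Rightarrow> 'k vec3 \<Rightarrow> bool" where
  "proportional u v \<longleftrightarrow> (\<exists>c. c \<noteq> 0 \<and> u = (c * comp v 0, c * comp v 1, c * comp v 2))"

definition subst :: "('k::comm_ring_1 \<Rightarrow> 'b::comm_ring_1) \<Rightarrow> (nat \<Rightarrow> 'b) \<Rightarrow> 'k mpoly \<Rightarrow> 'b" where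
  "subst phi sigma F = sum (\<lambda>mon::nat \<Rightarrow>\<^sub>0 nat. phi (Poly_Mapping.lookup F mon) * prod (\<lambda>j. sigma j ^ Poly_Mapping.lookup mon j) (Poly_Mapping.keys mon)) (Poly_Mapping.keys F)"

definition is_form :: "nat \<Rightarrow> 'k::comm_ring_1 mpoly \<Rightarrow> bool" where
  "is_form d F \<longleftrightarrow> F \<noteq> 0 \<and>
     (\<forall>m\<in>Poly_Mapping.keys F. Poly_Mapping.keys m \<subseteq> {0,1,2} \<and> Poly_Mapping.lookup m 0 + Poly_Mapping.lookup m 1 + Poly_Mapping.lookup m 2 = d)"

type_synonym 'k coordsys = "'k vec3 \<times> 'k vec3 \<times> 'k vec3"

definition det3 :: "'k::comm_ring_1 coordsys \<Rightarrow> 'k" where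
  "det3 E = (case E of (u, v, w) \<Rightarrow>
      comp u 0 * (comp v 1 * comp w 2 - comp v 2 * comp w 1)
    - comp u 1 * (comp v 0 * comp w 2 - comp v 2 * comp w 0)
    + comp u 2 * (comp v 0 * comp w 1 - comp v 1 * comp w 0))"

text \<open>A coordinate system is a basis (x0,x1,x2) of V*, given by coefficient vectors.\<close>
definition coord_sys :: "'k::comm_ring_1 coordsys \<Rightarrow> bool" where
  "coord_sys E \<longleftrightarrow> det3 E \<noteq> 0"

definition exps :: "nat \<Rightarrow> (nat \<times> nat \<times> nat) set" where
  "exps d = {(i0, i1, i2). i0 + i1 + i2 = d}"

definition emono :: "'k::comm_ring_1 coordsys \<Rightarrow> nat \<times> nat \<times> nat \<Rightarrow> 'k mpoly" where
  "emono E i = (case E of (x0, x1, x2) \<Rightarrow> case i of (i0, i1, i2) \<Rightarrow>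
      lin x0 ^ i0 * lin x1 ^ i1 * lin x2 ^ i2)"

definition coeffs_in :: "nat \<Rightarrow> 'k::comm_ring_1 coordsys \<Rightarrow> 'k mpoly \<Rightarrow> nat \<times> nat \<times> nat \<Rightarrow> 'k" where
  "coeffs_in d E F = (THE a. (\<forall>i. a i \<noteq> 0 \<longrightarrow> i \<in> exps d) \<and>
        F = (\<Sum>i\<in>exps d. Const (a i) * emono E i))"

definition support_in :: "nat \<Rightarrow> 'k::comm_ring_1 coordsys \<Rightarrow> 'k mpoly \<Rightarrow> (nat \<times> nat \<times> nat) set" where
  "support_in d E F = {i \<in> exps d. coeffs_in d E F i \<noteq> 0}"

definition pairing :: "nat \<times> nat \<times> nat \<Rightarrow> int \<times> int \<times> int \<Rightarrow> int" where
  "pairing i w = (case i of (i0, i1, i2) \<Rightarrow> case w of (w0, w1, w2) \<Rightarrow>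
      int i0 * w0 + int i1 * w1 + int i2 * w2)"

definition balanced :: "int \<times> int \<times> int \<Rightarrow> bool" where
  "balanced w = (case w of (w0, w1, w2) \<Rightarrow> w0 + w1 + w2 = 0)"

definition ordered :: "int \<times> int \<times> int \<Rightarrow> bool" where
  "ordered w = (case w of (w0, w1, w2) \<Rightarrow> w0 \<ge> w1 \<and> w1 \<ge> w2)"

definition instability :: "nat \<Rightarrow> 'k::comm_ring_1 mpoly \<Rightarrow> 'k coordsys \<Rightarrow> int \<times> int \<times> int \<Rightarrow> bool" where
  "instability d F E w \<longleftrightarrow> coord_sys E \<and> balanced w \<and> ordered w \<and>
      (\<forall>i\<in>support_in d E F. pairing i w > 0)"

definition semistable :: "nat \<Rightarrow> 'k::comm_ring_1 mpoly \<Rightarrow> bool" where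
  "semistable d F \<longleftrightarrow> \<not> (\<exists>E w. instability d F E w)"

definition perfect_field :: "'k::field itself \<Rightarrow> bool" where
  "perfect_field _ \<longleftrightarrow> CHAR('k) = 0 \<or> (\<forall>y::'k. \<exists>x. x ^ CHAR('k) = y)"

definition line_mult :: "'k::field vec3 \<Rightarrow> 'k mpoly \<Rightarrow> nat" where
  "line_mult l F = (GREATEST e. lin l ^ e dvd F)"

text \<open>Taylor expansion of F at the point p: F(p + s x) as a polynomial in s with
 coefficients in K[V]. The s^k coefficient is a form of degree k in x.\<close>
definition taylor :: "'k::field vec3 \<Rightarrow> 'k mpoly \<Rightarrow> 'k mpoly poly" where
  "taylor p F = subst (\<lambda>c. [:Const c:]) (\<lambda>j. [:Const (comp p j), Var j:]) F"

definition point_mult :: "'k::field vec3 \<Rightarrow> 'k mpoly \<Rightarrow> nat" where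
  "point_mult p F = (LEAST k. coeff (taylor p F) k \<noteq> 0)"

definition tangent_cone :: "'k::field vec3 \<Rightarrow> 'k mpoly \<Rightarrow> 'k mpoly" where
  "tangent_cone p F = coeff (taylor p F) (point_mult p F)"

text \<open>Intersection multiplicity at p of the line V+(l) (through p) with V+(G), l not dividing G:
 the order of vanishing at p of G restricted to the line, parametrised as p + s q
 for a point q on the line different from p.\<close>
definition int_mult :: "'k::field vec3 \<Rightarrow> 'k vec3 \<Rightarrow> 'k mpoly \<Rightarrow> nat" where
  "int_mult l p G = (let q = (SOME q. q \<noteq> (0, 0, 0) \<and> dot l q = 0 \<and> \<not> proportional q p) in
     (LEAST k. coeff (subst (\<lambda>c. [:c:]) (\<lambda>j. [:comp p j, comp q j:]) G) k \<noteq> 0))"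

definition cond_a :: "nat \<Rightarrow> 'k::field mpoly \<Rightarrow> 'k vec3 \<Rightarrow> bool" where
  "cond_a d F l \<longleftrightarrow> l \<noteq> (0, 0, 0) \<and> 3 * line_mult l F > d"

definition cond_b :: "nat \<Rightarrow> 'k::field mpoly \<Rightarrow> 'k vec3 \<Rightarrow> bool" where
  "cond_b d F p \<longleftrightarrow> p \<noteq> (0, 0, 0) \<and> 3 * point_mult p F > 2 * d"

definition cond_c :: "nat \<Rightarrow> 'k::field mpoly \<Rightarrow> 'k vec3 \<Rightarrow> 'k vec3 \<Rightarrow> bool" where
  "cond_c d F l p \<longleftrightarrow> l \<noteq> (0, 0, 0) \<and> p \<noteq> (0, 0, 0) \<and> dot l p = 0 \<and>
     (\<exists>m G. m > 0 \<and> F = lin l ^ m * G \<and> \<not> lin l dvd G \<and>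
            subst id (comp p) G = 0 \<and> 2 * int_mult l p G + m > d)"

definition cond_d :: "nat \<Rightarrow> 'k::field mpoly \<Rightarrow> 'k vec3 \<Rightarrow> 'k vec3 \<Rightarrow> bool" where
  "cond_d d F l p \<longleftrightarrow> l \<noteq> (0, 0, 0) \<and> p \<noteq> (0, 0, 0) \<and> 2 * point_mult p F > d \<and>
     (\<exists>e. 2 * e > point_mult p F \<and> lin l ^ e dvd tangent_cone p F)"

end

theory Submission
  imports Defs
begin

text \<open>
  Everything is read off the support of F in a coordinate system E = (x0, x1, x2), i.e. the set of
  exponents with nonzero coefficient: the line x0 = 0 has multiplicity min i0, the point
  x0 = x1 = 0 has multiplicity min (i0 + i1), and the tangent cone, the cofactor of the line and its
  intersection multiplicity with the line come from the monomials at which these minima are attained.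
  A balanced ordered weight is w = (s (2,-1,-1) + t (1,1,-2)) / 3 with s, t >= 0, so an instability
  says s (3 i0 - d) + t (d - 3 i2) > 0 on the support; if neither (a) nor (b) holds, comparing s with
  t yields (c) or (d), and under (a) resp. (b) the weight (2,-1,-1) resp. (1,1,-2) destabilizes.
  An instability survives triangular changes of coordinates, so it only depends on the flag formed
  by the line x0 = 0 and the point x0 = x1 = 0. Two distinct flags are related by a nontrivial
  permutation of a common adapted basis (Bruhat decomposition), and a computation on exponents shows
  that a support violating (a) and (b) is never destabilized both by an ordered weight and by a
  permuted ordered weight.
\<close>

section \<open>Substitution homomorphisms\<close>

definition eval_mon :: "(nat \<Rightarrow> 'b::comm_ring_1) \<Rightarrow> (nat \<Rightarrow>\<^sub>0 nat) \<Rightarrow> 'b" where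
  "eval_mon \<sigma> n = (\<Prod>j\<in>Poly_Mapping.keys n. \<sigma> j ^ Poly_Mapping.lookup n j)"

definition is_hom :: "('k::comm_ring_1 \<Rightarrow> 'b::comm_ring_1) \<Rightarrow> bool" where
  "is_hom phi \<longleftrightarrow> phi 0 = 0 \<and> phi 1 = 1 \<and> (\<forall>a b. phi (a + b) = phi a + phi b) \<and> (\<forall>a b. phi (a * b) = phi a * phi b)"

lemma eval_mon_superset:
  assumes "finite A" "Poly_Mapping.keys n \<subseteq> A"
  shows "eval_mon \<sigma> n = (\<Prod>j\<in>A. \<sigma> j ^ Poly_Mapping.lookup n j)"
  unfolding eval_mon_def
  by (rule prod.mono_neutral_left) (use assms in \<open>auto simp: in_keys_iff\<close>)

lemma eval_mon_add: "eval_mon \<sigma> (a + b) = eval_mon \<sigma> a * eval_mon \<sigma> b"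
proof -
  let ?A = "Poly_Mapping.keys a \<union> Poly_Mapping.keys b"
  have f: "finite ?A" by simp
  have k: "Poly_Mapping.keys (a + b) \<subseteq> ?A" by (rule keys_add)
  have ka: "Poly_Mapping.keys a \<subseteq> ?A" and kb: "Poly_Mapping.keys b \<subseteq> ?A" by auto
  show ?thesis
    unfolding eval_mon_superset[OF f k] eval_mon_superset[OF f ka] eval_mon_superset[OF f kb]
    by (auto simp: lookup_add power_add prod.distrib)
qed

lemma eval_mon_zero [simp]: "eval_mon \<sigma> 0 = 1"
  by (simp add: eval_mon_def)

lemma subst_superset:
  assumes "is_hom phi" "finite A" "Poly_Mapping.keys F \<subseteq> A"
  shows "subst phi \<sigma> F = (\<Sum>n\<in>A. phi (Poly_Mapping.lookup F n) * eval_mon \<sigma> n)"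
  unfolding subst_def eval_mon_def[symmetric]
  by (rule sum.mono_neutral_left) (use assms in \<open>auto simp: in_keys_iff is_hom_def\<close>)

lemma subst_add:
  assumes "is_hom phi"
  shows "subst phi \<sigma> (F + G) = subst phi \<sigma> F + subst phi \<sigma> G"
proof -
  let ?A = "Poly_Mapping.keys F \<union> Poly_Mapping.keys G"
  have f: "finite ?A" by simp
  have k: "Poly_Mapping.keys (F + G) \<subseteq> ?A" by (rule keys_add)
  have ka: "Poly_Mapping.keys F \<subseteq> ?A" and kb: "Poly_Mapping.keys G \<subseteq> ?A" by auto
  show ?thesis
    unfolding subst_superset[OF assms f k] subst_superset[OF assms f ka] subst_superset[OF assms f kb]
    using assms by (auto simp: lookup_add is_hom_def distrib_right sum.distrib)
qed

lemma subst_zero [simp]: "subst phi \<sigma> 0 = 0"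
  by (simp add: subst_def)

lemma subst_sum:
  assumes "is_hom phi"
  shows "subst phi \<sigma> (\<Sum>i\<in>I. f i) = (\<Sum>i\<in>I. subst phi \<sigma> (f i))"
  by (induction I rule: infinite_finite_induct) (auto simp: subst_add[OF assms])

lemma subst_single:
  assumes "is_hom phi"
  shows "subst phi \<sigma> (Poly_Mapping.single n c) = phi c * eval_mon \<sigma> n"
proof -
  have "subst phi \<sigma> (Poly_Mapping.single n c) = (\<Sum>m\<in>{n}. phi (Poly_Mapping.lookup (Poly_Mapping.single n c) m) * eval_mon \<sigma> m)"
    by (rule subst_superset[OF assms]) auto
  then show ?thesis by simp
qed

lemma poly_mapping_sum_single: "F = (\<Sum>n\<in>Poly_Mapping.keys F. Poly_Mapping.single n (Poly_Mapping.lookup F n))"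
proof (rule poly_mapping_eqI)
  fix k
  show "Poly_Mapping.lookup F k = Poly_Mapping.lookup (\<Sum>n\<in>Poly_Mapping.keys F. Poly_Mapping.single n (Poly_Mapping.lookup F n)) k"
    by (cases "k \<in> Poly_Mapping.keys F")
      (auto simp: lookup_sum lookup_single when_def in_keys_iff sum.delta)
qed

lemma subst_single_mult:
  assumes "is_hom phi"
  shows "subst phi \<sigma> (Poly_Mapping.single n c * G) = phi c * eval_mon \<sigma> n * subst phi \<sigma> G"
proof -
  have "Poly_Mapping.single n c * G = (\<Sum>m\<in>Poly_Mapping.keys G. Poly_Mapping.single n c * Poly_Mapping.single m (Poly_Mapping.lookup G m))"
    by (subst poly_mapping_sum_single[of G]) (simp add: sum_distrib_left)
  also have "\<dots> = (\<Sum>m\<in>Poly_Mapping.keys G. Poly_Mapping.single (n + m) (c * Poly_Mapping.lookup G m))"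
    by (simp add: mult_single)
  finally have "subst phi \<sigma> (Poly_Mapping.single n c * G) = (\<Sum>m\<in>Poly_Mapping.keys G. phi c * phi (Poly_Mapping.lookup G m) * (eval_mon \<sigma> n * eval_mon \<sigma> m))"
    using assms by (simp add: subst_sum subst_single eval_mon_add is_hom_def)
  also have "\<dots> = phi c * eval_mon \<sigma> n * subst phi \<sigma> G"
    unfolding subst_def eval_mon_def[symmetric] by (simp add: sum_distrib_left ac_simps)
  finally show ?thesis .
qed

lemma subst_mult:
  assumes "is_hom phi"
  shows "subst phi \<sigma> (F * G) = subst phi \<sigma> F * subst phi \<sigma> G"
proof -
  have "F * G = (\<Sum>n\<in>Poly_Mapping.keys F. Poly_Mapping.single n (Poly_Mapping.lookup F n) * G)"
    by (subst poly_mapping_sum_single[of F]) (simp add: sum_distrib_right)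
  then have "subst phi \<sigma> (F * G) = (\<Sum>n\<in>Poly_Mapping.keys F. phi (Poly_Mapping.lookup F n) * eval_mon \<sigma> n * subst phi \<sigma> G)"
    using assms by (simp add: subst_sum subst_single_mult)
  also have "\<dots> = subst phi \<sigma> F * subst phi \<sigma> G"
    unfolding subst_def[of phi \<sigma> F] eval_mon_def[symmetric] by (simp add: sum_distrib_right)
  finally show ?thesis .
qed

lemma subst_Const:
  assumes "is_hom phi"
  shows "subst phi \<sigma> (Const c) = phi c"
  using subst_single[OF assms, of \<sigma> 0 c] by (simp add: Const_def)

lemma subst_one:
  assumes "is_hom phi"
  shows "subst phi \<sigma> 1 = 1"
  using subst_Const[OF assms, of \<sigma> 1] assms by (simp add: Const_def is_hom_def)

lemma subst_Var:
  assumes "is_hom phi"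
  shows "subst phi \<sigma> (Var j) = \<sigma> j"
  using subst_single[OF assms, of \<sigma> "Poly_Mapping.single j 1" 1] assms
  by (simp add: Var_def is_hom_def eval_mon_def)

lemma subst_power:
  assumes "is_hom phi"
  shows "subst phi \<sigma> (F ^ e) = subst phi \<sigma> F ^ e"
  by (induction e) (simp_all add: subst_one[OF assms] subst_mult[OF assms])

lemma subst_prod:
  assumes "is_hom phi"
  shows "subst phi \<sigma> (\<Prod>i\<in>I. f i) = (\<Prod>i\<in>I. subst phi \<sigma> (f i))"
  by (induction I rule: infinite_finite_induct) (auto simp: subst_mult[OF assms] subst_one[OF assms])

lemma Const_add: "Const (a + b) = Const a + Const b"
  by (simp add: Const_def single_add)
lemma Const_mult: "Const (a * b) = Const a * Const b"
  by (simp add: Const_def mult_single)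
lemma Const_0 [simp]: "Const 0 = 0" by (simp add: Const_def)
lemma Const_1 [simp]: "Const 1 = 1" by (simp add: Const_def)

lemma is_hom_Const: "is_hom (Const :: 'k::comm_ring_1 \<Rightarrow> 'k mpoly)"
  by (simp add: is_hom_def Const_def single_add mult_single)

lemma is_hom_id: "is_hom id"
  by (simp add: is_hom_def)

lemma is_hom_const_poly: "is_hom (\<lambda>c. [:c:])"
  by (simp add: is_hom_def)

lemma is_hom_const_poly_Const: "is_hom (\<lambda>c. [:Const c:] :: 'k::comm_ring_1 mpoly poly)"
  by (simp add: is_hom_def Const_add Const_mult)

lemma subst_compose:
  assumes "is_hom phi"
  shows "subst phi \<sigma> (subst Const \<tau> F) = subst phi (\<lambda>j. subst phi \<sigma> (\<tau> j)) F"
proof -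
  have "subst phi \<sigma> (subst Const \<tau> F) = (\<Sum>n\<in>Poly_Mapping.keys F. phi (Poly_Mapping.lookup F n) * (\<Prod>j\<in>Poly_Mapping.keys n. subst phi \<sigma> (\<tau> j) ^ Poly_Mapping.lookup n j))"
    unfolding subst_def[of Const \<tau> F]
    by (simp add: subst_sum[OF assms] subst_mult[OF assms] subst_Const[OF assms] subst_prod[OF assms] subst_power[OF assms])
  then show ?thesis by (simp add: subst_def)
qed

lemma Var_power: "Var j ^ e = Poly_Mapping.single (Poly_Mapping.single j e) 1"
  by (induction e) (simp_all add: Var_def mult_single single_add[symmetric])

lemma prod_single: "(\<Prod>j\<in>A. Poly_Mapping.single (g j) (1::'k::comm_ring_1)) = Poly_Mapping.single (\<Sum>j\<in>A. g j) 1"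
  by (induction A rule: infinite_finite_induct) (auto simp: mult_single)

lemma single_one_eq_eval_mon: "Poly_Mapping.single n (1::'k::comm_ring_1) = eval_mon Var n"
proof -
  have "eval_mon Var n = (\<Prod>j\<in>Poly_Mapping.keys n. Poly_Mapping.single (Poly_Mapping.single j (Poly_Mapping.lookup n j)) (1::'k))"
    by (simp add: eval_mon_def Var_power)
  also have "\<dots> = Poly_Mapping.single (\<Sum>j\<in>Poly_Mapping.keys n. Poly_Mapping.single j (Poly_Mapping.lookup n j)) 1"
    by (rule prod_single)
  also have "(\<Sum>j\<in>Poly_Mapping.keys n. Poly_Mapping.single j (Poly_Mapping.lookup n j)) = n"
    by (rule poly_mapping_sum_single[symmetric])
  finally show ?thesis by simp
qed

lemma subst_Const_Var: "subst Const Var F = (F :: 'k::comm_ring_1 mpoly)"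
proof -
  have "subst Const Var F = (\<Sum>n\<in>Poly_Mapping.keys F. Const (Poly_Mapping.lookup F n) * Poly_Mapping.single n 1)"
    by (simp add: subst_def single_one_eq_eval_mon eval_mon_def)
  also have "\<dots> = (\<Sum>n\<in>Poly_Mapping.keys F. Poly_Mapping.single n (Poly_Mapping.lookup F n))"
    by (simp add: Const_def mult_single)
  finally show ?thesis using poly_mapping_sum_single[of F] by simp
qed

text \<open>Matrices are triples of rows, so they share the type of coordinate systems.\<close>

definition row :: "'k coordsys \<Rightarrow> nat \<Rightarrow> 'k vec3" where
  "row E k = (case E of (u, v, w) \<Rightarrow> if k = 0 then u else if k = 1 then v else w)"

definition entry :: "'k coordsys \<Rightarrow> nat \<Rightarrow> nat \<Rightarrow> 'k" where
  "entry M k j = comp (row M k) j"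

definition vec_mat :: "'k::comm_ring_1 vec3 \<Rightarrow> 'k coordsys \<Rightarrow> 'k vec3" where
  "vec_mat v M = (comp v 0 * entry M 0 0 + comp v 1 * entry M 1 0 + comp v 2 * entry M 2 0,
               comp v 0 * entry M 0 1 + comp v 1 * entry M 1 1 + comp v 2 * entry M 2 1,
               comp v 0 * entry M 0 2 + comp v 1 * entry M 1 2 + comp v 2 * entry M 2 2)"

definition mat_mult :: "'k::comm_ring_1 coordsys \<Rightarrow> 'k coordsys \<Rightarrow> 'k coordsys" where
  "mat_mult N M = (vec_mat (row N 0) M, vec_mat (row N 1) M, vec_mat (row N 2) M)"

definition lin_subst :: "'k::comm_ring_1 coordsys \<Rightarrow> 'k mpoly \<Rightarrow> 'k mpoly" where
  "lin_subst M P = subst Const (\<lambda>k. if k < 3 then lin (row M k) else Var k) P"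

definition mat_one :: "'k::comm_ring_1 coordsys" where
  "mat_one = ((1, 0, 0), (0, 1, 0), (0, 0, 1))"

definition cross :: "'k::comm_ring_1 vec3 \<Rightarrow> 'k vec3 \<Rightarrow> 'k vec3" where
  "cross a b = (comp a 1 * comp b 2 - comp a 2 * comp b 1,
                comp a 2 * comp b 0 - comp a 0 * comp b 2,
                comp a 0 * comp b 1 - comp a 1 * comp b 0)"

definition adjugate :: "'k::comm_ring_1 coordsys \<Rightarrow> 'k coordsys" where
  "adjugate E = (case E of (u, v, w) \<Rightarrow>
     let c0 = cross v w; c1 = cross w u; c2 = cross u v in
     ((comp c0 0, comp c1 0, comp c2 0),
      (comp c0 1, comp c1 1, comp c2 1),
      (comp c0 2, comp c1 2, comp c2 2)))"

definition mat_scale :: "'k::comm_ring_1 \<Rightarrow> 'k coordsys \<Rightarrow> 'k coordsys" where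
  "mat_scale c M = (case M of ((a0, a1, a2), (b0, b1, b2), (c0, c1, c2)) \<Rightarrow>
     ((c * a0, c * a1, c * a2), (c * b0, c * b1, c * b2), (c * c0, c * c1, c * c2)))"

definition mat_inv :: "'k::field coordsys \<Rightarrow> 'k coordsys" where
  "mat_inv E = mat_scale (inverse (det3 E)) (adjugate E)"

lemma comp_simps [simp]: "comp (a, b, c) 0 = a" "comp (a, b, c) (Suc 0) = b" "comp (a, b, c) 2 = c"
  by (simp_all add: comp_def)

lemma row_simps [simp]: "row (u, v, w) 0 = u" "row (u, v, w) (Suc 0) = v" "row (u, v, w) 2 = w"
  by (simp_all add: row_def)

lemma lin_subst_add: "lin_subst M (P + Q) = lin_subst M P + lin_subst M Q"
  by (simp add: lin_subst_def subst_add[OF is_hom_Const])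
lemma lin_subst_mult: "lin_subst M (P * Q) = lin_subst M P * lin_subst M Q"
  by (simp add: lin_subst_def subst_mult[OF is_hom_Const])
lemma lin_subst_Const: "lin_subst M (Const c) = Const c"
  by (simp add: lin_subst_def subst_Const[OF is_hom_Const])
lemma lin_subst_Var: "lin_subst M (Var k) = (if k < 3 then lin (row M k) else Var k)"
  by (simp add: lin_subst_def subst_Var[OF is_hom_Const])
lemma lin_subst_power: "lin_subst M (P ^ e) = lin_subst M P ^ e"
  by (simp add: lin_subst_def subst_power[OF is_hom_Const])
lemma lin_subst_sum: "lin_subst M (\<Sum>i\<in>I. f i) = (\<Sum>i\<in>I. lin_subst M (f i))"
  by (simp add: lin_subst_def subst_sum[OF is_hom_Const])
lemma lin_subst_zero [simp]: "lin_subst M 0 = 0"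
  by (simp add: lin_subst_def)
lemma lin_subst_one [simp]: "lin_subst M 1 = 1"
  by (simp add: lin_subst_def subst_one[OF is_hom_Const])
lemma lin_expand: "lin (a, b, c) = Const a * Var 0 + Const b * Var 1 + Const c * Var 2"
  by (simp add: lin_def)

lemma lin_subst_lin: "lin_subst M (lin v) = lin (vec_mat v M)"
proof -
  obtain a b c where v: "v = (a, b, c)" by (cases v) auto
  obtain r0 r1 r2 where M: "M = (r0, r1, r2)" by (cases M) auto
  obtain x0 x1 x2 where r0: "r0 = (x0, x1, x2)" by (cases r0) auto
  obtain y0 y1 y2 where r1: "r1 = (y0, y1, y2)" by (cases r1) auto
  obtain z0 z1 z2 where r2: "r2 = (z0, z1, z2)" by (cases r2) auto
  show ?thesis
    unfolding v M r0 r1 r2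
    by (simp add: lin_expand lin_subst_add lin_subst_mult lin_subst_Const lin_subst_Var vec_mat_def entry_def
        Const_add Const_mult algebra_simps)
qed

lemma lin_subst_lin_subst: "lin_subst M (lin_subst N P) = lin_subst (mat_mult N M) P"
proof -
  have "lin_subst M (lin_subst N P) = subst Const (\<lambda>k. lin_subst M (if k < 3 then lin (row N k) else Var k)) P"
    unfolding lin_subst_def[of N] by (simp add: lin_subst_def subst_compose[OF is_hom_Const])
  also have "(\<lambda>k. lin_subst M (if k < 3 then lin (row N k) else Var k)) = (\<lambda>k. if k < 3 then lin (row (mat_mult N M) k) else Var k)"
  proof
    fix k :: nat
    show "lin_subst M (if k < 3 then lin (row N k) else Var k) = (if k < 3 then lin (row (mat_mult N M) k) else Var k)"
      by (cases "k = 0"; cases "k = 1"; cases "k = 2")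
        (auto simp: lin_subst_lin lin_subst_Var mat_mult_def row_def)
  qed
  finally show ?thesis by (simp add: lin_subst_def)
qed

lemma lin_subst_mat_one: "lin_subst mat_one P = P"
proof -
  have "(\<lambda>k. if k < 3 then lin (row mat_one k) else Var k) = (Var :: nat \<Rightarrow> 'a mpoly)"
  proof
    fix k :: nat
    show "(if k < 3 then lin (row mat_one k) else Var k) = (Var k :: 'a mpoly)"
      by (cases "k = 0"; cases "k = 1"; cases "k = 2")
        (auto simp: mat_one_def row_def lin_expand)
  qed
  then show ?thesis by (simp add: lin_subst_def subst_Const_Var)
qed

lemma mat_mult_adjugate: "mat_mult E (adjugate E) = mat_scale (det3 E) mat_one"
proof -
  obtain r0 r1 r2 where M: "E = (r0, r1, r2)" by (cases E) auto
  obtain x0 x1 x2 where r0: "r0 = (x0, x1, x2)" by (cases r0) auto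
  obtain y0 y1 y2 where r1: "r1 = (y0, y1, y2)" by (cases r1) auto
  obtain z0 z1 z2 where r2: "r2 = (z0, z1, z2)" by (cases r2) auto
  show ?thesis unfolding M r0 r1 r2
    by (simp add: mat_mult_def adjugate_def vec_mat_def entry_def cross_def det3_def mat_one_def mat_scale_def Let_def algebra_simps)
qed

lemma adjugate_mat_mult: "mat_mult (adjugate E) E = mat_scale (det3 E) mat_one"
proof -
  obtain r0 r1 r2 where M: "E = (r0, r1, r2)" by (cases E) auto
  obtain x0 x1 x2 where r0: "r0 = (x0, x1, x2)" by (cases r0) auto
  obtain y0 y1 y2 where r1: "r1 = (y0, y1, y2)" by (cases r1) auto
  obtain z0 z1 z2 where r2: "r2 = (z0, z1, z2)" by (cases r2) auto
  show ?thesis unfolding M r0 r1 r2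
    by (simp add: mat_mult_def adjugate_def vec_mat_def entry_def cross_def det3_def mat_one_def mat_scale_def Let_def algebra_simps)
qed

lemma mat_mult_scale_right: "mat_mult N (mat_scale c M) = mat_scale c (mat_mult N M)"
proof -
  obtain r0 r1 r2 where M: "M = (r0, r1, r2)" by (cases M) auto
  obtain x0 x1 x2 where r0: "r0 = (x0, x1, x2)" by (cases r0) auto
  obtain y0 y1 y2 where r1: "r1 = (y0, y1, y2)" by (cases r1) auto
  obtain z0 z1 z2 where r2: "r2 = (z0, z1, z2)" by (cases r2) auto
  show ?thesis unfolding M r0 r1 r2
    by (simp add: mat_mult_def vec_mat_def entry_def mat_scale_def row_def split: prod.split) (simp add: algebra_simps)
qed

lemma mat_mult_scale_left: "mat_mult (mat_scale c N) M = mat_scale c (mat_mult N M)"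
proof -
  obtain r0 r1 r2 where M: "N = (r0, r1, r2)" by (cases N) auto
  obtain x0 x1 x2 where r0: "r0 = (x0, x1, x2)" by (cases r0) auto
  obtain y0 y1 y2 where r1: "r1 = (y0, y1, y2)" by (cases r1) auto
  obtain z0 z1 z2 where r2: "r2 = (z0, z1, z2)" by (cases r2) auto
  show ?thesis unfolding M r0 r1 r2
    by (simp add: mat_mult_def vec_mat_def entry_def mat_scale_def row_def split: prod.split) (simp add: algebra_simps)
qed

lemma mat_scale_inverse_one: "(c::'k::field) \<noteq> 0 \<Longrightarrow> mat_scale (inverse c) (mat_scale c mat_one) = mat_one"
  by (simp add: mat_scale_def mat_one_def)

lemma mat_mult_inv_right:
  fixes E :: "'k::field coordsys"
  assumes "det3 E \<noteq> 0"
  shows "mat_mult E (mat_inv E) = mat_one"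
  using assms by (simp add: mat_inv_def mat_mult_scale_right mat_mult_adjugate mat_scale_inverse_one)

lemma mat_mult_inv_left:
  fixes E :: "'k::field coordsys"
  assumes "det3 E \<noteq> 0"
  shows "mat_mult (mat_inv E) E = mat_one"
  using assms by (simp add: mat_inv_def mat_mult_scale_left adjugate_mat_mult mat_scale_inverse_one)

definition wdeg :: "(nat \<Rightarrow> int) \<Rightarrow> (nat \<Rightarrow>\<^sub>0 nat) \<Rightarrow> int" where
  "wdeg f n = (\<Sum>j\<in>Poly_Mapping.keys n. f j * int (Poly_Mapping.lookup n j))"

definition weight_ge :: "(nat \<Rightarrow> int) \<Rightarrow> int \<Rightarrow> 'k::comm_ring_1 mpoly \<Rightarrow> bool" where
  "weight_ge f c P \<longleftrightarrow> (\<forall>n\<in>Poly_Mapping.keys P. c \<le> wdeg f n)"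

lemma wdeg_superset:
  assumes "finite A" "Poly_Mapping.keys n \<subseteq> A"
  shows "wdeg f n = (\<Sum>j\<in>A. f j * int (Poly_Mapping.lookup n j))"
  unfolding wdeg_def by (rule sum.mono_neutral_left) (use assms in \<open>auto simp: in_keys_iff\<close>)

lemma wdeg_add: "wdeg f (a + b) = wdeg f a + wdeg f b"
proof -
  let ?A = "Poly_Mapping.keys a \<union> Poly_Mapping.keys b"
  have f: "finite ?A" by simp
  have k: "Poly_Mapping.keys (a + b) \<subseteq> ?A" by (rule keys_add)
  have ka: "Poly_Mapping.keys a \<subseteq> ?A" and kb: "Poly_Mapping.keys b \<subseteq> ?A" by auto
  show ?thesis
    unfolding wdeg_superset[OF f k] wdeg_superset[OF f ka] wdeg_superset[OF f kb]
    by (simp add: lookup_add sum.distrib algebra_simps)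
qed

lemma wdeg_zero [simp]: "wdeg f 0 = 0" by (simp add: wdeg_def)

lemma wdeg_single [simp]: "wdeg f (Poly_Mapping.single j e) = f j * int e"
  by (cases "e = 0") (simp_all add: wdeg_def)

lemma weight_ge_zero [simp]: "weight_ge f c 0" by (simp add: weight_ge_def)

lemma weight_ge_Const: "weight_ge f 0 (Const c)"
  by (simp add: weight_ge_def Const_def)

lemma weight_ge_one: "weight_ge f 0 1"
  by (simp add: weight_ge_def)

lemma weight_ge_mono: "a \<le> b \<Longrightarrow> weight_ge f b P \<Longrightarrow> weight_ge f a P"
  by (auto simp: weight_ge_def)

lemma weight_ge_add: "weight_ge f c P \<Longrightarrow> weight_ge f c Q \<Longrightarrow> weight_ge f c (P + Q)"
  using keys_add[of P Q] by (auto simp: weight_ge_def)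

lemma weight_ge_sum: "(\<And>i. i \<in> I \<Longrightarrow> weight_ge f c (h i)) \<Longrightarrow> weight_ge f c (\<Sum>i\<in>I. h i)"
  by (induction I rule: infinite_finite_induct) (auto intro: weight_ge_add)

lemma weight_ge_mult: "weight_ge f a P \<Longrightarrow> weight_ge f b Q \<Longrightarrow> weight_ge f (a + b) (P * Q)"
  using keys_mult[of P Q] by (fastforce simp: weight_ge_def wdeg_add intro: add_mono)

lemma weight_ge_power: "weight_ge f a P \<Longrightarrow> weight_ge f (int e * a) (P ^ e)"
proof (induction e)
  case 0 then show ?case by (simp add: weight_ge_one)
next
  case (Suc e)
  then have "weight_ge f (a + int e * a) (P * P ^ e)" by (intro weight_ge_mult) auto
  then show ?case by (simp add: algebra_simps)
qed

lemma weight_ge_prod: "(\<And>i. i \<in> I \<Longrightarrow> weight_ge f (a i) (h i)) \<Longrightarrow> weight_ge f (\<Sum>i\<in>I. a i) (\<Prod>i\<in>I. h i)"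
proof (induction I rule: infinite_finite_induct)
  case (infinite A) then show ?case by (simp add: weight_ge_one)
next
  case empty then show ?case by (simp add: weight_ge_one)
next
  case (insert x F) then show ?case by (simp add: weight_ge_mult)
qed

lemma weight_ge_subst:
  assumes s: "\<And>j. weight_ge f (f j) (\<sigma> j)" and P: "weight_ge f a P"
  shows "weight_ge f a (subst Const \<sigma> P)"
  unfolding subst_def
proof (rule weight_ge_sum)
  fix n assume n: "n \<in> Poly_Mapping.keys P"
  have "weight_ge f (\<Sum>j\<in>Poly_Mapping.keys n. int (Poly_Mapping.lookup n j) * f j)
      (\<Prod>j\<in>Poly_Mapping.keys n. \<sigma> j ^ Poly_Mapping.lookup n j)"
    by (rule weight_ge_prod) (rule weight_ge_power[OF s])
  then have "weight_ge f (wdeg f n) (\<Prod>j\<in>Poly_Mapping.keys n. \<sigma> j ^ Poly_Mapping.lookup n j)"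
    by (simp add: wdeg_def mult.commute)
  then have "weight_ge f (0 + wdeg f n) (Const (Poly_Mapping.lookup P n) * (\<Prod>j\<in>Poly_Mapping.keys n. \<sigma> j ^ Poly_Mapping.lookup n j))"
    by (intro weight_ge_mult weight_ge_Const)
  then show "weight_ge f a (Const (Poly_Mapping.lookup P n) * (\<Prod>j\<in>Poly_Mapping.keys n. \<sigma> j ^ Poly_Mapping.lookup n j))"
    using P n by (force simp: weight_ge_def)
qed

lemma weight_ge_Var: "weight_ge f (f j) (Var j)"
  by (simp add: weight_ge_def Var_def)

lemma weight_ge_lin_support:
  assumes "\<And>m. m < 3 \<Longrightarrow> comp v m \<noteq> 0 \<Longrightarrow> c \<le> f m"
  shows "weight_ge f c (lin v)"
proof -
  have t: "weight_ge f c (Const (comp v m) * Var m)" if "m < 3" for m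
  proof (cases "comp v m = 0")
    case True then show ?thesis by simp
  next
    case False
    then have "c \<le> f m" using assms that by auto
    moreover have "weight_ge f (0 + f m) (Const (comp v m) * Var m)" by (intro weight_ge_mult weight_ge_Const weight_ge_Var)
    ultimately show ?thesis by (auto intro: weight_ge_mono)
  qed
  show ?thesis unfolding lin_def using t[of 0] t[of 1] t[of 2] by (intro weight_ge_add) auto
qed

lemma weight_ge_lin_subst:
  assumes "f 0 = f 1" "f 1 = f 2" "weight_ge f a P"
  shows "weight_ge f a (lin_subst M P)"
  unfolding lin_subst_def
proof (rule weight_ge_subst[OF _ assms(3)])
  fix j
  show "weight_ge f (f j) (if j < 3 then lin (row M j) else Var j)"
  proof (cases "j < 3")
    case True
    then have "j = 0 \<or> j = 1 \<or> j = 2" by auto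
    then have "f j = f 0" using assms by (auto simp: numeral_2_eq_2)
    have "weight_ge f (f j) (lin (row M j))"
      by (rule weight_ge_lin_support) (use \<open>f j = f 0\<close> assms in \<open>auto simp: numeral_3_eq_3 numeral_2_eq_2 less_Suc_eq\<close>)
    then show ?thesis using True by simp
  qed (simp add: weight_ge_Var)
qed

definition outer_weight :: "nat \<Rightarrow> int" where "outer_weight j = (if j < 3 then 0 else -1)"

text \<open>Homogeneity of degree d in X0, X1, X2 (zero allowed), phrased as three weight bounds --
  degree at least d, degree at most d, no variable beyond X2 -- so that invariance under linear
  substitution is an instance of the weight bound for substitutions.\<close>

definition homogeneous :: "nat \<Rightarrow> 'k::comm_ring_1 mpoly \<Rightarrow> bool" where
  "homogeneous d P \<longleftrightarrow> weight_ge (\<lambda>_. 1) (int d) P \<and> weight_ge (\<lambda>_. -1) (- int d) P \<and> weight_ge outer_weight 0 P"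

lemma homogeneous_lin_subst: "homogeneous d P \<Longrightarrow> homogeneous d (lin_subst M P)"
  unfolding homogeneous_def by (auto intro!: weight_ge_lin_subst simp: outer_weight_def)

section \<open>Coefficients in a coordinate system\<close>

definition expmon :: "nat \<times> nat \<times> nat \<Rightarrow> (nat \<Rightarrow>\<^sub>0 nat)" where
  "expmon i = (case i of (i0, i1, i2) \<Rightarrow> Poly_Mapping.single 0 i0 + Poly_Mapping.single 1 i1 + Poly_Mapping.single 2 i2)"

lemma lookup_expmon:
  "Poly_Mapping.lookup (expmon (i0, i1, i2)) j = (if j = 0 then i0 else if j = 1 then i1 else if j = 2 then i2 else 0)"
  by (auto simp: expmon_def lookup_add lookup_single)

lemma expmon_inj: "expmon i = expmon i' \<Longrightarrow> i = i'"
proof -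
  assume a: "expmon i = expmon i'"
  obtain a0 a1 a2 where i: "i = (a0, a1, a2)" by (cases i) auto
  obtain b0 b1 b2 where i': "i' = (b0, b1, b2)" by (cases i') auto
  have "Poly_Mapping.lookup (expmon i) j = Poly_Mapping.lookup (expmon i') j" for j using a by simp
  from this[of 0] this[of 1] this[of 2] show ?thesis unfolding i i' lookup_expmon by simp
qed

lemma keys_expmon: "Poly_Mapping.keys (expmon i) \<subseteq> {0, 1, 2}"
proof -
  obtain a0 a1 a2 where i: "i = (a0, a1, a2)" by (cases i) auto
  show ?thesis unfolding i by (auto simp: in_keys_iff lookup_expmon split: if_splits)
qed

lemma wdeg_012:
  assumes "Poly_Mapping.keys n \<subseteq> {0, 1, 2}"
  shows "wdeg f n = f 0 * int (Poly_Mapping.lookup n 0) + f 1 * int (Poly_Mapping.lookup n 1) + f 2 * int (Poly_Mapping.lookup n 2)"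
  by (subst wdeg_superset[OF _ assms]) auto

lemma wdeg_expmon: "wdeg f (expmon (i0, i1, i2)) = f 0 * int i0 + f 1 * int i1 + f 2 * int i2"
  by (subst wdeg_012[OF keys_expmon]) (simp add: lookup_expmon)

lemma expmon_of_keys: "Poly_Mapping.keys n \<subseteq> {0, 1, 2} \<Longrightarrow> n = expmon (Poly_Mapping.lookup n 0, Poly_Mapping.lookup n 1, Poly_Mapping.lookup n 2)"
  by (rule poly_mapping_eqI) (auto simp: lookup_expmon in_keys_iff)

lemma keys_subset_of_outer_weight:
  assumes "0 \<le> wdeg outer_weight n"
  shows "Poly_Mapping.keys n \<subseteq> {0, 1, 2}"
proof
  fix j assume j: "j \<in> Poly_Mapping.keys n"
  show "j \<in> {0, 1, 2}"
  proof (rule ccontr)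
    assume "j \<notin> {0, 1, 2}"
    then have "outer_weight j * int (Poly_Mapping.lookup n j) < 0" using j by (auto simp: outer_weight_def in_keys_iff)
    moreover have "wdeg outer_weight n = outer_weight j * int (Poly_Mapping.lookup n j) + (\<Sum>i\<in>Poly_Mapping.keys n - {j}. outer_weight i * int (Poly_Mapping.lookup n i))"
      unfolding wdeg_def using j by (simp add: sum.remove)
    moreover have "(\<Sum>i\<in>Poly_Mapping.keys n - {j}. outer_weight i * int (Poly_Mapping.lookup n i)) \<le> 0"
      by (rule sum_nonpos) (auto simp: outer_weight_def mult_nonpos_nonneg)
    ultimately show False using assms by linarith
  qed
qed

lemma homogeneous_keys:
  assumes "homogeneous d P" "n \<in> Poly_Mapping.keys P"
  shows "\<exists>i\<in>exps d. n = expmon i"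
proof -
  have k: "Poly_Mapping.keys n \<subseteq> {0, 1, 2}" using assms keys_subset_of_outer_weight by (auto simp: homogeneous_def weight_ge_def)
  have "wdeg (\<lambda>_. 1) n = int d" using assms by (force simp: homogeneous_def weight_ge_def wdeg_def sum_negf)
  then have "Poly_Mapping.lookup n 0 + Poly_Mapping.lookup n 1 + Poly_Mapping.lookup n 2 = d"
    by (simp add: wdeg_012[OF k])
  then show ?thesis using expmon_of_keys[OF k] by (auto simp: exps_def)
qed

lemma is_form_homogeneous: "is_form d F \<Longrightarrow> homogeneous d F"
  unfolding is_form_def homogeneous_def weight_ge_def
  by (auto simp: wdeg_012 outer_weight_def)

lemma finite_exps: "finite (exps d)"
proof -
  have "exps d \<subseteq> {0..d} \<times> {0..d} \<times> {0..d}" by (auto simp: exps_def)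
  then show ?thesis by (rule finite_subset) auto
qed

definition Xpow :: "nat \<times> nat \<times> nat \<Rightarrow> 'k::comm_ring_1 mpoly" where
  "Xpow i = Poly_Mapping.single (expmon i) 1"

lemma Xpow_Var: "Xpow (i0, i1, i2) = Var 0 ^ i0 * Var 1 ^ i1 * Var 2 ^ i2"
  by (simp add: Xpow_def Var_power mult_single expmon_def)

lemma emono_eq_lin_subst: "emono E i = lin_subst E (Xpow i)"
proof -
  obtain a0 a1 a2 where i: "i = (a0, a1, a2)" by (cases i) auto
  obtain u v w where E: "E = (u, v, w)" by (cases E) auto
  show ?thesis unfolding i E by (simp add: emono_def Xpow_Var lin_subst_mult lin_subst_power lin_subst_Var)
qed

lemma homogeneous_expand:
  assumes "homogeneous d P"
  shows "P = (\<Sum>i\<in>exps d. Const (Poly_Mapping.lookup P (expmon i)) * Xpow i)"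
proof -
  have "(\<Sum>i\<in>exps d. Const (Poly_Mapping.lookup P (expmon i)) * Xpow i) = (\<Sum>i\<in>exps d. Poly_Mapping.single (expmon i) (Poly_Mapping.lookup P (expmon i)))"
    by (simp add: Xpow_def Const_def mult_single)
  also have "\<dots> = (\<Sum>n\<in>expmon ` exps d. Poly_Mapping.single n (Poly_Mapping.lookup P n))"
    by (subst sum.reindex) (auto intro: inj_onI expmon_inj)
  also have "\<dots> = (\<Sum>n\<in>Poly_Mapping.keys P. Poly_Mapping.single n (Poly_Mapping.lookup P n))"
    using homogeneous_keys[OF assms] finite_exps by (intro sum.mono_neutral_right) (auto simp: in_keys_iff)
  finally show ?thesis using poly_mapping_sum_single[of P] by simp
qed

definition in_coords :: "'k::field coordsys \<Rightarrow> 'k mpoly \<Rightarrow> 'k mpoly" where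
  "in_coords E P = lin_subst (mat_inv E) P"

lemma lin_subst_in_coords: "coord_sys E \<Longrightarrow> lin_subst E (in_coords E P) = P"
  by (simp add: in_coords_def coord_sys_def lin_subst_lin_subst mat_mult_inv_left lin_subst_mat_one)

lemma in_coords_lin_subst: "coord_sys E \<Longrightarrow> in_coords E (lin_subst E P) = P"
  by (simp add: in_coords_def coord_sys_def lin_subst_lin_subst mat_mult_inv_right lin_subst_mat_one)

lemma lookup_sum_Xpow:
  assumes "j \<in> exps d"
  shows "Poly_Mapping.lookup (\<Sum>i\<in>exps d. Const (a i) * Xpow i) (expmon j) = a j"
proof -
  have "Poly_Mapping.lookup (\<Sum>i\<in>exps d. Const (a i) * Xpow i) (expmon j) = (\<Sum>i\<in>exps d. if i = j then a i else 0)"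
    unfolding lookup_sum
    by (intro sum.cong refl) (auto simp: Xpow_def Const_def mult_single lookup_single when_def dest: expmon_inj)
  then show ?thesis using assms finite_exps by simp
qed

definition coord_expansion :: "nat \<Rightarrow> 'k::comm_ring_1 coordsys \<Rightarrow> 'k mpoly \<Rightarrow> (nat \<times> nat \<times> nat \<Rightarrow> 'k) \<Rightarrow> bool" where
  "coord_expansion d E F a \<longleftrightarrow> (\<forall>i. a i \<noteq> 0 \<longrightarrow> i \<in> exps d) \<and> F = (\<Sum>i\<in>exps d. Const (a i) * emono E i)"

lemma coord_expansion_in_coords:
  fixes F :: "'k::field mpoly"
  assumes E: "coord_sys E" and F: "is_form d F"
  shows "coord_expansion d E F (\<lambda>i. if i \<in> exps d then Poly_Mapping.lookup (in_coords E F) (expmon i) else 0)"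
proof -
  let ?c = "\<lambda>i. if i \<in> exps d then Poly_Mapping.lookup (in_coords E F) (expmon i) else 0"
  have hom_F: "homogeneous d (in_coords E F)"
    unfolding in_coords_def by (rule homogeneous_lin_subst[OF is_form_homogeneous[OF F]])
  have "F = lin_subst E (in_coords E F)" using lin_subst_in_coords[OF E] by simp
  also have "\<dots> = lin_subst E (\<Sum>i\<in>exps d. Const (Poly_Mapping.lookup (in_coords E F) (expmon i)) * Xpow i)"
    using homogeneous_expand[OF hom_F] by simp
  also have "\<dots> = (\<Sum>i\<in>exps d. Const (?c i) * emono E i)"
    by (simp add: lin_subst_sum lin_subst_mult lin_subst_Const emono_eq_lin_subst)
  finally show ?thesis unfolding coord_expansion_def by auto
qed

lemma coord_expansion_unique:
  fixes F :: "'k::field mpoly"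
  assumes E: "coord_sys E" and a: "coord_expansion d E F a"
  shows "a = (\<lambda>i. if i \<in> exps d then Poly_Mapping.lookup (in_coords E F) (expmon i) else 0)"
proof
  have fp: "in_coords E F = (\<Sum>i\<in>exps d. Const (a i) * Xpow i)"
    using a unfolding coord_expansion_def
    by (simp add: emono_eq_lin_subst in_coords_def lin_subst_sum lin_subst_mult lin_subst_Const)
      (metis in_coords_lin_subst[OF E] in_coords_def)
  fix i show "a i = (if i \<in> exps d then Poly_Mapping.lookup (in_coords E F) (expmon i) else 0)"
  proof (cases "i \<in> exps d")
    case True then show ?thesis unfolding fp using lookup_sum_Xpow[where a=a, OF True] by simp
  next
    case False then show ?thesis using a unfolding coord_expansion_def by metis
  qed
qed

lemma coeffs_in_char:
  fixes F :: "'k::field mpoly"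
  assumes E: "coord_sys E" and F: "is_form d F"
  shows "coeffs_in d E F = (\<lambda>i. if i \<in> exps d then Poly_Mapping.lookup (in_coords E F) (expmon i) else 0)"
  unfolding coeffs_in_def coord_expansion_def[symmetric]
  using coord_expansion_in_coords[OF E F] coord_expansion_unique[OF E] by (rule the_equality)

lemma coeffs_in_eq:
  fixes F :: "'k::field mpoly"
  assumes "coord_sys E" "is_form d F" "coord_expansion d E F a"
  shows "coeffs_in d E F = a"
  using coeffs_in_char[OF assms(1,2)] coord_expansion_unique[OF assms(1,3)] by simp

lemma coord_expansion_coeffs_in:
  fixes F :: "'k::field mpoly"
  assumes "coord_sys E" "is_form d F"
  shows "coord_expansion d E F (coeffs_in d E F)"
  using coord_expansion_in_coords[OF assms] coeffs_in_char[OF assms] by simp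

definition e0 :: "nat \<times> nat \<times> nat \<Rightarrow> nat" where "e0 i = fst i"
definition e1 :: "nat \<times> nat \<times> nat \<Rightarrow> nat" where "e1 i = fst (snd i)"
definition e2 :: "nat \<times> nat \<times> nat \<Rightarrow> nat" where "e2 i = snd (snd i)"

lemma e_simps [simp]: "e0 (a, b, c) = a" "e1 (a, b, c) = b" "e2 (a, b, c) = c"
  by (simp_all add: e0_def e1_def e2_def)

lemma subst_lin:
  assumes "is_hom phi"
  shows "subst phi \<sigma> (lin v) = phi (comp v 0) * \<sigma> 0 + phi (comp v 1) * \<sigma> 1 + phi (comp v 2) * \<sigma> 2"
  by (simp add: lin_def subst_add[OF assms] subst_mult[OF assms] subst_Const[OF assms] subst_Var[OF assms])

lemma lin_subst_Xpow: "lin_subst E (Xpow i) = lin (row E 0) ^ e0 i * lin (row E 1) ^ e1 i * lin (row E 2) ^ e2 i"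
proof -
  obtain a b c where i: "i = (a, b, c)" by (cases i) auto
  show ?thesis unfolding i by (simp add: Xpow_Var lin_subst_mult lin_subst_power lin_subst_Var)
qed

lemma subst_lin_subst_sum_Xpow:
  assumes "is_hom phi"
  shows "subst phi \<sigma> (lin_subst E (\<Sum>i\<in>S. Const (b i) * Xpow (h i))) =
    (\<Sum>i\<in>S. phi (b i) * subst phi \<sigma> (lin (row E 0)) ^ e0 (h i) * subst phi \<sigma> (lin (row E 1)) ^ e1 (h i)
       * subst phi \<sigma> (lin (row E 2)) ^ e2 (h i))"
  by (simp add: lin_subst_sum lin_subst_mult lin_subst_Const lin_subst_Xpow subst_sum[OF assms] subst_mult[OF assms]
      subst_Const[OF assms] subst_power[OF assms] mult.assoc)

lemma pCons0_power: "[:0, a:] ^ m = monom (a ^ m) m"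
proof -
  have "[:0, a:] = monom a 1" by (simp add: monom_Suc monom_0)
  then show ?thesis by (simp add: monom_power)
qed

lemma coeff_sum_pow3:
  "coeff (\<Sum>i\<in>S. [:b i:] * [:0, a0:] ^ f0 i * [:0, a1:] ^ f1 i * [:c, a2:] ^ f2 i) k =
   (\<Sum>i\<in>S. if f0 i + f1 i \<le> k then b i * a0 ^ f0 i * a1 ^ f1 i * coeff ([:c, a2:] ^ f2 i) (k - (f0 i + f1 i)) else 0)"
proof -
  have "[:b i:] * [:0, a0:] ^ f0 i * [:0, a1:] ^ f1 i * [:c, a2:] ^ f2 i
     = monom (b i * a0 ^ f0 i * a1 ^ f1 i) (f0 i + f1 i) * [:c, a2:] ^ f2 i" for i
  proof -
    have "[:b i:] = monom (b i) 0" by (simp add: monom_0)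
    then show ?thesis unfolding pCons0_power by (simp only: mult_monom add_0_left)
  qed
  then show ?thesis
    by (simp only: coeff_sum coeff_monom_mult) (auto intro!: sum.cong)
qed

lemma Var_dvd_keys:
  fixes P :: "'k::comm_ring_1 mpoly"
  assumes "Var k ^ e dvd P"
  shows "\<forall>n\<in>Poly_Mapping.keys P. e \<le> Poly_Mapping.lookup n k"
proof
  fix n assume n: "n \<in> Poly_Mapping.keys P"
  obtain G where P: "P = Var k ^ e * G" using assms by (auto elim: dvdE)
  have "n \<in> {a + b |a b. a \<in> Poly_Mapping.keys (Var k ^ e :: 'k mpoly) \<and> b \<in> Poly_Mapping.keys G}"
    by (rule subsetD[OF keys_mult]) (use n P in simp)
  moreover have "Poly_Mapping.keys (Var k ^ e :: 'k mpoly) = {Poly_Mapping.single k e}"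
    by (simp add: Var_power)
  ultimately obtain a b where "n = a + b" "a = Poly_Mapping.single k e"
    by blast
  then show "e \<le> Poly_Mapping.lookup n k" by (simp add: lookup_add)
qed

lemma Xpow_split0: "e \<le> a \<Longrightarrow> Xpow (a, b, c) = Var 0 ^ e * Xpow (a - e, b, c)"
proof -
  assume "e \<le> a"
  then have "Var 0 ^ a = Var 0 ^ e * (Var 0 ^ (a - e) :: 'k::comm_ring_1 mpoly)"
    by (simp add: power_add[symmetric])
  then show ?thesis unfolding Xpow_Var by (subst \<open>Var 0 ^ a = _\<close>) (simp only: mult.assoc)
qed

lemma lin_scale: "lin (c * comp v 0, c * comp v 1, c * comp v 2) = Const c * lin v"
  by (simp add: lin_def Const_mult algebra_simps)

lemma Const_mult_Const_inverse:
  fixes c :: "'k::field"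
  assumes "c \<noteq> 0"
  shows "Const c * Const (inverse c) = 1"
  using assms by (simp add: Const_mult[symmetric])

lemma Const_mult_power_dvd_iff:
  fixes c :: "'k::field"
  assumes "c \<noteq> 0"
  shows "(Const c * P) ^ e dvd F \<longleftrightarrow> P ^ e dvd F"
proof
  assume "(Const c * P) ^ e dvd F"
  then have "Const c ^ e * P ^ e dvd F" by (simp only: power_mult_distrib)
  then show "P ^ e dvd F" by (rule dvd_mult_right)
next
  assume a: "P ^ e dvd F"
  have "(Const c * P) ^ e * Const (inverse c) ^ e = (Const c * P * Const (inverse c)) ^ e"
    by (simp only: power_mult_distrib)
  also have "\<dots> = (P * (Const c * Const (inverse c))) ^ e"
    by (simp only: ac_simps)
  also have "\<dots> = P ^ e" using Const_mult_Const_inverse[OF assms(1)] by simp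
  finally have "P ^ e = (Const c * P) ^ e * Const (inverse c) ^ e" by simp
  then have "(Const c * P) ^ e dvd P ^ e" by (rule dvdI)
  then show "(Const c * P) ^ e dvd F" using a by (rule dvd_trans)
qed

lemma in_coords_row0: "coord_sys E \<Longrightarrow> in_coords E (lin (row E 0)) = Var 0"
  using in_coords_lin_subst[of E "Var 0"] by (simp add: lin_subst_Var)

lemma Const_power: "Const (c ^ m) = Const c ^ m"
  by (induction m) (simp_all add: Const_mult)

definition coord_coeff :: "'k::field coordsys \<Rightarrow> 'k mpoly \<Rightarrow> nat \<times> nat \<times> nat \<Rightarrow> 'k" where
  "coord_coeff E F i = Poly_Mapping.lookup (in_coords E F) (expmon i)"

lemma support_in_eq:
  assumes "coord_sys E" "is_form d F"
  shows "support_in d E F = {i \<in> exps d. coord_coeff E F i \<noteq> 0}"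
  using coeffs_in_char[OF assms] by (auto simp: support_in_def coord_coeff_def)

lemma homogeneous_in_coords: "is_form d F \<Longrightarrow> homogeneous d (in_coords E F)"
  unfolding in_coords_def by (rule homogeneous_lin_subst[OF is_form_homogeneous])

lemma keys_in_coords:
  assumes "coord_sys E" "is_form d F"
  shows "Poly_Mapping.keys (in_coords E F) = expmon ` support_in d E F"
proof
  show "Poly_Mapping.keys (in_coords E F) \<subseteq> expmon ` support_in d E F"
  proof
    fix n assume n: "n \<in> Poly_Mapping.keys (in_coords E F)"
    then obtain i where "i \<in> exps d" "n = expmon i" using homogeneous_keys[OF homogeneous_in_coords[OF assms(2)]] by blast
    then show "n \<in> expmon ` support_in d E F" using n by (auto simp: support_in_eq[OF assms] coord_coeff_def in_keys_iff)
  qed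
  show "expmon ` support_in d E F \<subseteq> Poly_Mapping.keys (in_coords E F)"
    by (auto simp: support_in_eq[OF assms] coord_coeff_def in_keys_iff)
qed

lemma lookup_sum_Xpow_inj:
  assumes "inj_on h T" "j \<in> T" "finite T"
  shows "Poly_Mapping.lookup (\<Sum>i\<in>T. Const (b i) * Xpow (h i)) (expmon (h j)) = b j"
proof -
  have "Poly_Mapping.lookup (\<Sum>i\<in>T. Const (b i) * Xpow (h i)) (expmon (h j)) = (\<Sum>i\<in>T. if i = j then b i else 0)"
    unfolding lookup_sum
  proof (intro sum.cong refl)
    fix i assume i: "i \<in> T"
    have "expmon (h i) = expmon (h j) \<longleftrightarrow> i = j" using assms(1) i assms(2) by (auto dest: expmon_inj inj_onD)
    then show "Poly_Mapping.lookup (Const (b i) * Xpow (h i)) (expmon (h j)) = (if i = j then b i else 0)"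
      by (auto simp: Xpow_def Const_def mult_single lookup_single when_def)
  qed
  then show ?thesis using assms by simp
qed

lemma in_coords_expand:
  assumes "coord_sys E" "is_form d F"
  shows "in_coords E F = (\<Sum>i\<in>support_in d E F. Const (coord_coeff E F i) * Xpow i)"
proof -
  have "in_coords E F = (\<Sum>i\<in>exps d. Const (coord_coeff E F i) * Xpow i)"
    using homogeneous_expand[OF homogeneous_in_coords[OF assms(2)]] by (simp add: coord_coeff_def)
  also have "\<dots> = (\<Sum>i\<in>support_in d E F. Const (coord_coeff E F i) * Xpow i)"
    using finite_exps by (intro sum.mono_neutral_right) (auto simp: support_in_eq[OF assms])
  finally show ?thesis .
qed

lemma form_expand:
  assumes "coord_sys E" "is_form d F"
  shows "F = lin_subst E (\<Sum>i\<in>support_in d E F. Const (coord_coeff E F i) * Xpow i)"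
  using in_coords_expand[OF assms] lin_subst_in_coords[OF assms(1), of F] by simp

lemma finite_support_in: "finite (support_in d E F)"
  using finite_exps by (auto simp: support_in_def)

lemma support_in_nonempty:
  fixes F :: "'k::field mpoly"
  assumes "coord_sys E" "is_form d F"
  shows "support_in d E F \<noteq> {}"
proof
  assume "support_in d E F = {}"
  then have "F = 0" using form_expand[OF assms] by simp
  then show False using assms(2) by (simp add: is_form_def)
qed

lemma support_in_exps: "i \<in> support_in d E F \<Longrightarrow> e0 i + e1 i + e2 i = d"
  by (cases i) (auto simp: support_in_def exps_def)

lemma in_coords_mult: "in_coords E (P * Q) = in_coords E P * in_coords E Q"
  by (simp add: in_coords_def lin_subst_mult)
lemma in_coords_power: "in_coords E (P ^ k) = in_coords E P ^ k"
  by (simp add: in_coords_def lin_subst_power)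

section \<open>Multiplicities read off the support\<close>

lemma row0_power_dvd_iff:
  assumes E: "coord_sys E"
  shows "lin (row E 0) ^ e dvd F \<longleftrightarrow> Var 0 ^ e dvd in_coords E F"
proof
  assume "lin (row E 0) ^ e dvd F"
  then obtain G where "F = lin (row E 0) ^ e * G" by (auto elim: dvdE)
  then have "in_coords E F = Var 0 ^ e * in_coords E G" by (simp add: in_coords_mult in_coords_power in_coords_row0[OF E])
  then show "Var 0 ^ e dvd in_coords E F" by (rule dvdI)
next
  assume "Var 0 ^ e dvd in_coords E F"
  then obtain H where "in_coords E F = Var 0 ^ e * H" by (auto elim: dvdE)
  then have "lin_subst E (in_coords E F) = lin (row E 0) ^ e * lin_subst E H" by (simp add: lin_subst_mult lin_subst_power lin_subst_Var)
  then have "F = lin (row E 0) ^ e * lin_subst E H" using lin_subst_in_coords[OF E] by simp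
  then show "lin (row E 0) ^ e dvd F" by (rule dvdI)
qed

lemma Var0_power_dvd_in_coords_iff:
  assumes E: "coord_sys E" and F: "is_form d F"
  shows "Var 0 ^ e dvd in_coords E F \<longleftrightarrow> (\<forall>i\<in>support_in d E F. e \<le> e0 i)"
proof
  assume "Var 0 ^ e dvd in_coords E F"
  from Var_dvd_keys[OF this] show "\<forall>i\<in>support_in d E F. e \<le> e0 i"
    unfolding keys_in_coords[OF E F] by (auto simp: lookup_expmon e0_def split: prod.splits)
next
  assume a: "\<forall>i\<in>support_in d E F. e \<le> e0 i"
  have "in_coords E F = (\<Sum>i\<in>support_in d E F. Const (coord_coeff E F i) * (Var 0 ^ e * Xpow (e0 i - e, e1 i, e2 i)))"
    unfolding in_coords_expand[OF E F]
  proof (intro sum.cong refl)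
    fix i assume "i \<in> support_in d E F"
    then have "e \<le> e0 i" using a by auto
    then show "Const (coord_coeff E F i) * Xpow i = Const (coord_coeff E F i) * (Var 0 ^ e * Xpow (e0 i - e, e1 i, e2 i))"
      by (cases i) (simp add: Xpow_split0)
  qed
  also have "\<dots> = Var 0 ^ e * (\<Sum>i\<in>support_in d E F. Const (coord_coeff E F i) * Xpow (e0 i - e, e1 i, e2 i))"
    by (simp add: sum_distrib_left ac_simps)
  finally show "Var 0 ^ e dvd in_coords E F" by (rule dvdI)
qed

lemma proportional_lin:
  assumes "proportional u v"
  shows "\<exists>c. c \<noteq> 0 \<and> lin u = Const c * lin v"
proof -
  obtain c where c: "c \<noteq> 0" "u = (c * comp v 0, c * comp v 1, c * comp v 2)" using assms by (auto simp: proportional_def)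
  then show ?thesis using lin_scale[of c v] by auto
qed

lemma lin_power_dvd_iff:
  assumes E: "coord_sys E" and F: "is_form d F" and p: "proportional (row E 0) l"
  shows "lin l ^ e dvd F \<longleftrightarrow> (\<forall>i\<in>support_in d E F. e \<le> e0 i)"
proof -
  obtain c where c: "c \<noteq> 0" "lin (row E 0) = Const c * lin l" using proportional_lin[OF p] by blast
  have "lin l ^ e dvd F \<longleftrightarrow> lin (row E 0) ^ e dvd F" using Const_mult_power_dvd_iff[OF c(1)] c(2) by simp
  then show ?thesis using row0_power_dvd_iff[OF E] Var0_power_dvd_in_coords_iff[OF E F] by simp
qed

lemma line_mult_eq_Min:
  assumes E: "coord_sys E" and F: "is_form d F" and p: "proportional (row E 0) l"
  shows "line_mult l F = Min (e0 ` support_in d E F)"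
  unfolding line_mult_def
proof (rule Greatest_equality)
  show "lin l ^ Min (e0 ` support_in d E F) dvd F"
    unfolding lin_power_dvd_iff[OF assms] using finite_support_in[of d E F] by (auto intro!: Min_le)
next
  fix y assume "lin l ^ y dvd F"
  then have "\<forall>i\<in>support_in d E F. y \<le> e0 i" by (simp add: lin_power_dvd_iff[OF assms])
  then show "y \<le> Min (e0 ` support_in d E F)"
    using finite_support_in[of d E F] support_in_nonempty[OF E F] by (simp add: Min_ge_iff)
qed

definition adj_col :: "'k::comm_ring_1 coordsys \<Rightarrow> nat \<Rightarrow> 'k vec3" where
  "adj_col E k = (case E of (u, v, w) \<Rightarrow> if k = 0 then cross v w else if k = 1 then cross w u else cross u v)"

definition vec_scale :: "'k::comm_ring_1 \<Rightarrow> 'k vec3 \<Rightarrow> 'k vec3" where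
  "vec_scale c v = (c * comp v 0, c * comp v 1, c * comp v 2)"

definition dual_pt :: "'k::field coordsys \<Rightarrow> nat \<Rightarrow> 'k vec3" where
  "dual_pt E k = vec_scale (inverse (det3 E)) (adj_col E k)"

definition lin_comb3 :: "'k::comm_ring_1 \<Rightarrow> 'k \<Rightarrow> 'k \<Rightarrow> 'k vec3 \<Rightarrow> 'k vec3 \<Rightarrow> 'k vec3 \<Rightarrow> 'k vec3" where
  "lin_comb3 a b c x y z = (a * comp x 0 + b * comp y 0 + c * comp z 0,
                        a * comp x 1 + b * comp y 1 + c * comp z 1,
                        a * comp x 2 + b * comp y 2 + c * comp z 2)"

lemma dot_adj_col: "dot (row E j) (adj_col E k) = (if j = k \<or> (j \<ge> 2 \<and> k \<ge> 2) then det3 E else 0)"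
proof -
  obtain r0 r1 r2 where M: "E = (r0, r1, r2)" by (cases E) auto
  obtain x0 x1 x2 where r0: "r0 = (x0, x1, x2)" by (cases r0) auto
  obtain y0 y1 y2 where r1: "r1 = (y0, y1, y2)" by (cases r1) auto
  obtain z0 z1 z2 where r2: "r2 = (z0, z1, z2)" by (cases r2) auto
  show ?thesis unfolding M r0 r1 r2
    by (simp add: row_def adj_col_def dot_def cross_def det3_def algebra_simps)
qed

lemma det_scale_eq_lin_comb3:
  "vec_scale (det3 E) v = lin_comb3 (dot (row E 0) v) (dot (row E 1) v) (dot (row E 2) v) (adj_col E 0) (adj_col E 1) (adj_col E 2)"
proof -
  obtain r0 r1 r2 where M: "E = (r0, r1, r2)" by (cases E) auto
  obtain x0 x1 x2 where r0: "r0 = (x0, x1, x2)" by (cases r0) auto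
  obtain y0 y1 y2 where r1: "r1 = (y0, y1, y2)" by (cases r1) auto
  obtain z0 z1 z2 where r2: "r2 = (z0, z1, z2)" by (cases r2) auto
  obtain a b c where v: "v = (a, b, c)" by (cases v) auto
  show ?thesis unfolding M r0 r1 r2 v
    by (simp add: vec_scale_def lin_comb3_def adj_col_def dot_def cross_def det3_def algebra_simps)
qed

lemma dot_comm: "dot u v = dot v u"
  by (simp add: dot_def ac_simps)

lemma dot_vec_scale: "dot u (vec_scale c v) = c * dot u v"
  by (simp add: dot_def vec_scale_def algebra_simps)

lemma dot_row_dual_pt:
  assumes "coord_sys E"
  shows "dot (row E j) (dual_pt E k) = (if j = k \<or> (j \<ge> 2 \<and> k \<ge> 2) then 1 else 0)"
  using assms by (simp add: dual_pt_def dot_vec_scale dot_adj_col coord_sys_def)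

lemma vec_eq_lin_comb3_dual:
  fixes E :: "'k::field coordsys"
  assumes "coord_sys E"
  shows "v = lin_comb3 (dot (row E 0) v) (dot (row E 1) v) (dot (row E 2) v) (dual_pt E 0) (dual_pt E 1) (dual_pt E 2)"
proof -
  have d: "det3 E \<noteq> 0" using assms by (simp add: coord_sys_def)
  have "vec_scale (inverse (det3 E)) (vec_scale (det3 E) v) = v" using d
    by (cases v) (simp add: vec_scale_def)
  then show ?thesis unfolding det_scale_eq_lin_comb3
    by (simp add: dual_pt_def vec_scale_def lin_comb3_def algebra_simps)
qed

lemma dual_dots_zero:
  fixes E :: "'k::field coordsys"
  assumes "coord_sys E" "dot (row E 0) v = 0" "dot (row E 1) v = 0" "dot (row E 2) v = 0"
  shows "v = (0, 0, 0)"
  using vec_eq_lin_comb3_dual[OF assms(1), of v] assms by (simp add: lin_comb3_def)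

lemma dual_dots_point:
  fixes E :: "'k::field coordsys"
  assumes "coord_sys E" "dot (row E 0) v = 0" "dot (row E 1) v = 0"
  shows "v = vec_scale (dot (row E 2) v) (dual_pt E 2)"
  using vec_eq_lin_comb3_dual[OF assms(1), of v] assms by (simp add: lin_comb3_def vec_scale_def)

lemma row0: "row E 0 = fst E" by (cases E) (simp add: row_def)
lemma row1: "row E 1 = fst (snd E)" by (cases E) (simp add: row_def)
lemma row1_Suc: "row E (Suc 0) = fst (snd E)" by (cases E) (simp add: row_def)
lemma taylor_lin: "subst (\<lambda>c. [:Const c:]) (\<lambda>j. [:Const (comp p j), Var j:]) (lin v) = [:Const (dot v p), lin v:]"
  unfolding subst_lin[OF is_hom_const_poly_Const]
  by (simp add: dot_def lin_def Const_add Const_mult algebra_simps)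

lemma taylor_expand:
  fixes F :: "'k::field mpoly"
  assumes E: "coord_sys E" and F: "is_form d F" and p: "dot (row E 0) p = 0" "dot (row E 1) p = 0"
  shows "taylor p F = (\<Sum>i\<in>support_in d E F. [:Const (coord_coeff E F i):] * [:0, lin (row E 0):] ^ e0 i *
      [:0, lin (row E 1):] ^ e1 i * [:Const (dot (row E 2) p), lin (row E 2):] ^ e2 i)"
  unfolding taylor_def
  by (subst form_expand[OF E F], subst subst_lin_subst_sum_Xpow[OF is_hom_const_poly_Const], simp only: taylor_lin p Const_0)

lemma coeff_taylor:
  fixes F :: "'k::field mpoly"
  assumes E: "coord_sys E" and F: "is_form d F" and p: "dot (row E 0) p = 0" "dot (row E 1) p = 0"
  shows "coeff (taylor p F) k = (\<Sum>i\<in>support_in d E F. if e0 i + e1 i \<le> k then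
     Const (coord_coeff E F i) * lin (row E 0) ^ e0 i * lin (row E 1) ^ e1 i *
     coeff ([:Const (dot (row E 2) p), lin (row E 2):] ^ e2 i) (k - (e0 i + e1 i)) else 0)"
  unfolding taylor_expand[OF assms] by (rule coeff_sum_pow3)

lemma in_coords_zero [simp]: "in_coords E 0 = 0" by (simp add: in_coords_def)

lemma point_mult_eq_Min:
  fixes F :: "'k::field mpoly"
  assumes E: "coord_sys E" and F: "is_form d F" and p: "dot (row E 0) p = 0" "dot (row E 1) p = 0"
    and p0: "p \<noteq> (0, 0, 0)"
  defines "M \<equiv> Min ((\<lambda>i. e0 i + e1 i) ` support_in d E F)"
  shows "point_mult p F = M"
    and "tangent_cone p F = lin_subst E (\<Sum>i\<in>{i\<in>support_in d E F. e0 i + e1 i = M}.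
            Const (coord_coeff E F i * dot (row E 2) p ^ e2 i) * Xpow (e0 i, e1 i, 0))"
proof -
  let ?S = "support_in d E F"
  let ?S' = "{i\<in>?S. e0 i + e1 i = M}"
  let ?g = "dot (row E 2) p"
  have g: "?g \<noteq> 0" using dual_dots_zero[OF E p] p0 by auto
  have fin: "finite ?S" by (rule finite_support_in)
  have Mle: "M \<le> e0 i + e1 i" if "i \<in> ?S" for i unfolding M_def using fin that by (auto intro!: Min_le)
  obtain j where j: "j \<in> ?S" "e0 j + e1 j = M"
    unfolding M_def using fin support_in_nonempty[OF E F] by (metis (no_types, lifting) Min_in finite_imageI image_iff image_is_empty)
  have low: "coeff (taylor p F) k = 0" if "k < M" for k
    unfolding coeff_taylor[OF E F p] using Mle that by (intro sum.neutral) (auto dest: Mle)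
  have "coeff (taylor p F) M = (\<Sum>i\<in>?S. if e0 i + e1 i = M then
     Const (coord_coeff E F i) * lin (row E 0) ^ e0 i * lin (row E 1) ^ e1 i * Const ?g ^ e2 i else 0)"
    unfolding coeff_taylor[OF E F p]
    by (intro sum.cong refl) (auto simp: coeff_0_power dest: Mle)
  also have "\<dots> = (\<Sum>i\<in>?S'. Const (coord_coeff E F i) * lin (row E 0) ^ e0 i * lin (row E 1) ^ e1 i * Const ?g ^ e2 i)"
    by (simp only: sum.inter_filter[OF fin])
  also have "\<dots> = lin_subst E (\<Sum>i\<in>?S'. Const (coord_coeff E F i * ?g ^ e2 i) * Xpow (e0 i, e1 i, 0))"
    by (simp add: lin_subst_sum lin_subst_mult lin_subst_Const lin_subst_power lin_subst_Xpow Const_mult Const_power ac_simps)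
  finally have cM: "coeff (taylor p F) M = lin_subst E (\<Sum>i\<in>?S'. Const (coord_coeff E F i * ?g ^ e2 i) * Xpow (e0 i, e1 i, 0))" .
  have inj: "inj_on (\<lambda>i. (e0 i, e1 i, 0::nat)) ?S'"
  proof (rule inj_onI)
    fix a b assume a: "a \<in> ?S'" and b: "b \<in> ?S'" and eq: "(e0 a, e1 a, 0::nat) = (e0 b, e1 b, 0)"
    have "e2 a = e2 b" using a b support_in_exps[of a d E F] support_in_exps[of b d E F] by auto
    then show "a = b" using eq by (cases a, cases b) auto
  qed
  have jS': "j \<in> ?S'" using j by auto
  have "Poly_Mapping.lookup (in_coords E (coeff (taylor p F) M)) (expmon (e0 j, e1 j, 0)) = coord_coeff E F j * ?g ^ e2 j"
    unfolding cM in_coords_lin_subst[OF E]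
    using lookup_sum_Xpow_inj[OF inj jS', of "\<lambda>i. coord_coeff E F i * ?g ^ e2 i"] fin by simp
  moreover have "coord_coeff E F j \<noteq> 0" using j(1) support_in_eq[OF E F] by auto
  ultimately have "in_coords E (coeff (taylor p F) M) \<noteq> 0" using g by auto
  then have nz: "coeff (taylor p F) M \<noteq> 0" by auto
  show pm: "point_mult p F = M"
    unfolding point_mult_def
  proof (rule Least_equality)
    show "coeff (taylor p F) M \<noteq> 0" by (rule nz)
    fix y assume "coeff (taylor p F) y \<noteq> 0"
    then show "M \<le> y" using low by (meson not_le)
  qed
  show "tangent_cone p F = lin_subst E (\<Sum>i\<in>?S'. Const (coord_coeff E F i * ?g ^ e2 i) * Xpow (e0 i, e1 i, 0))"
    unfolding tangent_cone_def pm by (rule cM)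
qed

definition swap01 :: "'k coordsys \<Rightarrow> 'k coordsys" where
  "swap01 E = (fst (snd E), fst E, snd (snd E))"
definition swap12 :: "'k coordsys \<Rightarrow> 'k coordsys" where
  "swap12 E = (fst E, snd (snd E), fst (snd E))"
definition sw01 :: "nat \<times> nat \<times> nat \<Rightarrow> nat \<times> nat \<times> nat" where
  "sw01 i = (e1 i, e0 i, e2 i)"
definition sw12 :: "nat \<times> nat \<times> nat \<Rightarrow> nat \<times> nat \<times> nat" where
  "sw12 i = (e0 i, e2 i, e1 i)"

lemma sw01_inv [simp]: "sw01 (sw01 i) = i" by (cases i) (simp add: sw01_def)
lemma sw12_inv [simp]: "sw12 (sw12 i) = i" by (cases i) (simp add: sw12_def)
lemma sw01_exps: "sw01 i \<in> exps d \<longleftrightarrow> i \<in> exps d" by (cases i) (auto simp: sw01_def exps_def)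
lemma sw12_exps: "sw12 i \<in> exps d \<longleftrightarrow> i \<in> exps d" by (cases i) (auto simp: sw12_def exps_def)

lemma coord_swap01: "coord_sys E \<Longrightarrow> coord_sys (swap01 E)"
  by (cases E) (auto simp: coord_sys_def swap01_def det3_def algebra_simps)
lemma coord_swap12: "coord_sys E \<Longrightarrow> coord_sys (swap12 E)"
  by (cases E) (auto simp: coord_sys_def swap12_def det3_def algebra_simps)

lemma emono_swap01: "emono (swap01 E) i = emono E (sw01 i)"
  by (cases E; cases i) (simp add: emono_def swap01_def sw01_def ac_simps)
lemma emono_swap12: "emono (swap12 E) i = emono E (sw12 i)"
  by (cases E; cases i) (simp add: emono_def swap12_def sw12_def ac_simps)

lemma bij_sw01: "bij_betw sw01 (exps d) (exps d)"
  by (rule bij_betw_byWitness[where f'=sw01]) (auto simp: sw01_exps)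
lemma bij_sw12: "bij_betw sw12 (exps d) (exps d)"
  by (rule bij_betw_byWitness[where f'=sw12]) (auto simp: sw12_exps)

lemma coeffs_in_reindex:
  fixes F :: "'k::field mpoly"
  assumes E: "coord_sys E" "coord_sys E'" and F: "is_form d F"
    and bij: "bij_betw \<sigma> (exps d) (exps d)" and exps: "\<And>i. \<sigma> i \<in> exps d \<longleftrightarrow> i \<in> exps d"
    and em: "\<And>i. emono E' i = emono E (\<sigma> i)"
  shows "coeffs_in d E' F = (\<lambda>i. coeffs_in d E F (\<sigma> i))"
proof (rule coeffs_in_eq[OF E(2) F])
  let ?a = "coeffs_in d E F"
  have a: "(\<forall>i. ?a i \<noteq> 0 \<longrightarrow> i \<in> exps d)" "F = (\<Sum>i\<in>exps d. Const (?a i) * emono E i)"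
    using coord_expansion_coeffs_in[OF E(1) F] by (auto simp: coord_expansion_def)
  have "(\<Sum>i\<in>exps d. Const (?a (\<sigma> i)) * emono E' i) = (\<Sum>j\<in>exps d. Const (?a j) * emono E j)"
    unfolding em by (rule sum.reindex_bij_betw[OF bij, of "\<lambda>j. Const (?a j) * emono E j"])
  then show "coord_expansion d E' F (\<lambda>i. ?a (\<sigma> i))"
    unfolding coord_expansion_def using a exps by metis
qed

lemma support_in_reindex:
  assumes coeffs: "coeffs_in d E' F = (\<lambda>i. coeffs_in d E F (\<sigma> i))"
    and inv: "\<And>i. \<sigma> (\<sigma> i) = i" and exps: "\<And>i. \<sigma> i \<in> exps d \<longleftrightarrow> i \<in> exps d"
  shows "support_in d E' F = \<sigma> ` support_in d E F"
proof (rule set_eqI)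
  fix i
  have im: "i \<in> \<sigma> ` X \<longleftrightarrow> \<sigma> i \<in> X" for X by (metis image_iff inv)
  show "i \<in> support_in d E' F \<longleftrightarrow> i \<in> \<sigma> ` support_in d E F"
    unfolding im support_in_def coeffs by (simp add: exps)
qed

lemma support_swap01:
  fixes F :: "'k::field mpoly"
  assumes E: "coord_sys E" and F: "is_form d F"
  shows "support_in d (swap01 E) F = sw01 ` support_in d E F"
  using coeffs_in_reindex[OF E coord_swap01[OF E] F bij_sw01 sw01_exps emono_swap01]
  by (rule support_in_reindex) (simp_all add: sw01_exps)

lemma support_swap12:
  fixes F :: "'k::field mpoly"
  assumes E: "coord_sys E" and F: "is_form d F"
  shows "support_in d (swap12 E) F = sw12 ` support_in d E F"
  using coeffs_in_reindex[OF E coord_swap12[OF E] F bij_sw12 sw12_exps emono_swap12]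
  by (rule support_in_reindex) (simp_all add: sw12_exps)

section \<open>Changing coordinates within a flag\<close>

definition weight_fun :: "int \<times> int \<times> int \<Rightarrow> nat \<Rightarrow> int" where
  "weight_fun w j = (case w of (a, b, c) \<Rightarrow> if j = 0 then a else if j = 1 then b else if j = 2 then c else 0)"

lemma wdeg_weight_fun_expmon: "wdeg (weight_fun w) (expmon i) = pairing i w"
  by (cases w; cases i) (simp add: wdeg_expmon weight_fun_def pairing_def)

lemma comp_vec_mat_inv:
  fixes E' :: "'k::field coordsys"
  shows "comp (vec_mat v (mat_inv E')) m = (if m < 3 then dot v (dual_pt E' m) else dot v (dual_pt E' 2))"
proof -
  obtain r0 r1 r2 where M: "E' = (r0, r1, r2)" by (cases E') auto
  obtain x0 x1 x2 where r0: "r0 = (x0, x1, x2)" by (cases r0) auto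
  obtain y0 y1 y2 where r1: "r1 = (y0, y1, y2)" by (cases r1) auto
  obtain z0 z1 z2 where r2: "r2 = (z0, z1, z2)" by (cases r2) auto
  show ?thesis unfolding M r0 r1 r2
    by (auto simp: vec_mat_def mat_inv_def mat_scale_def adjugate_def dual_pt_def vec_scale_def adj_col_def dot_def entry_def Let_def comp_def algebra_simps)
qed

lemma proportional_dot: "proportional u l \<Longrightarrow> \<exists>c. c \<noteq> 0 \<and> dot u v = c * dot l v"
proof -
  assume "proportional u l"
  then obtain c where c: "c \<noteq> 0" "u = (c * comp l 0, c * comp l 1, c * comp l 2)" by (auto simp: proportional_def)
  then have "dot u v = c * dot l v" by (simp add: dot_def algebra_simps)
  then show ?thesis using c by blast
qed

lemma proportional_dot_eq_0: "proportional u (l::'k::field vec3) \<Longrightarrow> dot u v = 0 \<longleftrightarrow> dot l v = 0"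
  using proportional_dot[of u l v] by auto

definition adapted :: "'k::field coordsys \<Rightarrow> 'k vec3 \<Rightarrow> 'k vec3 \<Rightarrow> bool" where
  "adapted E l p \<longleftrightarrow> proportional (fst E) l \<and> dot (fst E) p = 0 \<and> dot (fst (snd E)) p = 0"

lemma same_flag_triangular:
  fixes E E' :: "'k::field coordsys"
  assumes E: "coord_sys E" "adapted E l p" and E': "coord_sys E'" "adapted E' l p"
    and p: "p \<noteq> (0, 0, 0)"
  shows "m = 1 \<or> m = 2 \<Longrightarrow> dot (row E 0) (dual_pt E' m) = 0"
    and "dot (row E 1) (dual_pt E' 2) = 0"
proof -
  have Ea: "proportional (row E 0) l" "dot (row E 1) p = 0"
    using E(2) by (simp_all add: adapted_def row0 row1 row1_Suc)
  have Ea': "proportional (row E' 0) l" "dot (row E' 0) p = 0" "dot (row E' 1) p = 0"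
    using E'(2) by (simp_all add: adapted_def row0 row1 row1_Suc)
  have "dot (row E' 0) (dual_pt E' m) = 0" if "m = 1 \<or> m = 2" for m
    using that dot_row_dual_pt[OF E'(1)] by auto
  then show "dot (row E 0) (dual_pt E' m) = 0" if "m = 1 \<or> m = 2"
    using that Ea(1) Ea'(1) proportional_dot_eq_0 by metis
  have pp: "p = vec_scale (dot (row E' 2) p) (dual_pt E' 2)" by (rule dual_dots_point[OF E'(1) Ea'(2,3)])
  have g: "dot (row E' 2) p \<noteq> 0" using dual_dots_zero[OF E'(1) Ea'(2,3)] p by blast
  from Ea(2) have "dot (row E' 2) p * dot (row E 1) (dual_pt E' 2) = 0"
    by (subst (asm) pp) (simp add: dot_vec_scale)
  then show "dot (row E 1) (dual_pt E' 2) = 0" using g by simp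
qed

text \<open>The change of coordinates between two coordinate systems adapted to the same flag is
  triangular, so it maps each x_k to a combination of coordinates of no smaller weight; hence the
  lower weight bound on the support is preserved.\<close>

lemma instability_same_flag:
  fixes F :: "'k::field mpoly"
  assumes F: "is_form d F"
    and E: "coord_sys E" "adapted E l p" and E': "coord_sys E'" "adapted E' l p"
    and p: "p \<noteq> (0, 0, 0)"
    and inst: "instability d F E w"
  shows "instability d F E' w"
proof -
  note tri = same_flag_triangular[OF E E' p]
  obtain w0 w1 w2 where w: "w = (w0, w1, w2)" by (cases w) auto
  have ord: "w0 \<ge> w1" "w1 \<ge> w2" using inst unfolding instability_def ordered_def w by auto
  let ?C = "mat_mult E (mat_inv E')"
  have "weight_ge (weight_fun w) 1 (in_coords E F)"
    using inst unfolding weight_ge_def keys_in_coords[OF E(1) F] instability_def by (auto simp: wdeg_weight_fun_expmon)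
  have C: "comp (row ?C k) m = dot (row E k) (dual_pt E' m)" if "k < 3" "m < 3" for k m
  proof -
    have "row ?C k = vec_mat (row E k) (mat_inv E')"
      using that by (cases "k = 0"; cases "k = 1") (auto simp: mat_mult_def row_def)
    then show ?thesis using that by (simp add: comp_vec_mat_inv)
  qed
  have sig: "weight_ge (weight_fun w) (weight_fun w k) (if k < 3 then lin (row ?C k) else Var k)" for k
  proof (cases "k < 3")
    case False then show ?thesis by (simp add: weight_ge_Var)
  next
    case True
    have "weight_ge (weight_fun w) (weight_fun w k) (lin (row ?C k))"
    proof (rule weight_ge_lin_support)
      fix m assume m: "m < 3" and nz: "comp (row ?C k) m \<noteq> 0"
      then have nz': "dot (row E k) (dual_pt E' m) \<noteq> 0" using C True by simp
      have "k = 0 \<or> k = 1 \<or> k = 2" "m = 0 \<or> m = 1 \<or> m = 2" using True m by auto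
      then show "weight_fun w k \<le> weight_fun w m" using nz' tri ord unfolding w weight_fun_def by auto
    qed
    then show ?thesis using True by simp
  qed
  have "in_coords E' F = lin_subst ?C (in_coords E F)"
    by (simp add: in_coords_def lin_subst_lin_subst[symmetric] lin_subst_in_coords[OF E(1), unfolded in_coords_def])
  then have "weight_ge (weight_fun w) 1 (in_coords E' F)"
    unfolding lin_subst_def using weight_ge_subst[OF sig \<open>weight_ge (weight_fun w) 1 (in_coords E F)\<close>] by simp
  then have "\<forall>i\<in>support_in d E' F. pairing i w > 0"
    unfolding weight_ge_def keys_in_coords[OF E'(1) F] by (auto simp: wdeg_weight_fun_expmon)
  then show ?thesis using inst E'(1) unfolding instability_def by auto
qed

lemma row_nonzero:
  fixes E :: "'k::field coordsys"
  assumes "coord_sys E" "k < 3"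
  shows "row E k \<noteq> (0, 0, 0)"
proof
  assume "row E k = (0, 0, 0)"
  then have "dot (row E k) (dual_pt E k) = 0" by (simp add: dot_def)
  then show False using dot_row_dual_pt[OF assms(1), of k k] by simp
qed

lemma dual_pt_nonzero:
  assumes "coord_sys E"
  shows "dual_pt E k \<noteq> (0, 0, 0)"
proof
  assume "dual_pt E k = (0, 0, 0)"
  then have "dot (row E k) (dual_pt E k) = 0" by (simp add: dot_def)
  then show False using dot_row_dual_pt[OF assms(1), of k k] by simp
qed

lemma proportional_refl: "proportional (v::'k::field vec3) v"
  by (cases v) (auto simp: proportional_def intro: exI[where x=1])

lemma cond_a_row0:
  fixes F :: "'k::field mpoly"
  assumes E: "coord_sys E" and F: "is_form d F" and h: "\<forall>i\<in>support_in d E F. d < 3 * e0 i"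
  shows "cond_a d F (row E 0)"
proof -
  have "line_mult (row E 0) F = Min (e0 ` support_in d E F)"
    by (rule line_mult_eq_Min[OF E F proportional_refl])
  moreover obtain j where "j \<in> support_in d E F" "Min (e0 ` support_in d E F) = e0 j"
    using finite_support_in[of d E F] support_in_nonempty[OF E F]
    by (metis (no_types, lifting) Min_in finite_imageI image_iff image_is_empty)
  ultimately show ?thesis using h row_nonzero[OF E, of 0] by (auto simp: cond_a_def)
qed

lemma cond_a_support:
  fixes F :: "'k::field mpoly"
  assumes E: "coord_sys E" and F: "is_form d F" and c: "cond_a d F l" and p: "proportional (row E 0) l"
  shows "\<forall>i\<in>support_in d E F. d < 3 * e0 i"
proof
  fix i assume i: "i \<in> support_in d E F"
  have "line_mult l F = Min (e0 ` support_in d E F)" by (rule line_mult_eq_Min[OF E F p])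
  then have "line_mult l F \<le> e0 i" using Min_le[OF finite_imageI[OF finite_support_in] imageI[OF i]] by simp
  then show "d < 3 * e0 i" using c by (auto simp: cond_a_def)
qed

lemma cond_b_dual_pt:
  fixes F :: "'k::field mpoly"
  assumes E: "coord_sys E" and F: "is_form d F" and h: "\<forall>i\<in>support_in d E F. 3 * e2 i < d"
  shows "cond_b d F (dual_pt E 2)"
proof -
  have p: "dot (row E 0) (dual_pt E 2) = 0" "dot (row E 1) (dual_pt E 2) = 0" using dot_row_dual_pt[OF E] by auto
  have "point_mult (dual_pt E 2) F = Min ((\<lambda>i. e0 i + e1 i) ` support_in d E F)"
    by (rule point_mult_eq_Min(1)[OF E F p dual_pt_nonzero[OF E]])
  moreover obtain j where "j \<in> support_in d E F" "Min ((\<lambda>i. e0 i + e1 i) ` support_in d E F) = e0 j + e1 j"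
    using finite_support_in[of d E F] support_in_nonempty[OF E F]
    by (metis (no_types, lifting) Min_in finite_imageI image_iff image_is_empty)
  ultimately show ?thesis using h support_in_exps[of j d E F] dual_pt_nonzero[OF E] by (auto simp: cond_b_def)
qed

lemma cond_b_support:
  fixes F :: "'k::field mpoly"
  assumes E: "coord_sys E" and F: "is_form d F" and c: "cond_b d F p"
    and p: "dot (row E 0) p = 0" "dot (row E 1) p = 0"
  shows "\<forall>i\<in>support_in d E F. 3 * e2 i < d"
proof
  fix i assume i: "i \<in> support_in d E F"
  have p0: "p \<noteq> (0,0,0)" using c by (simp add: cond_b_def)
  have "point_mult p F = Min ((\<lambda>i. e0 i + e1 i) ` support_in d E F)"
    by (rule point_mult_eq_Min(1)[OF E F p p0])
  then have "point_mult p F \<le> e0 i + e1 i" using Min_le[OF finite_imageI[OF finite_support_in] imageI[OF i]] by simp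
  then show "3 * e2 i < d" using c support_in_exps[OF i] by (auto simp: cond_b_def)
qed

lemma cond_d_flag:
  fixes F :: "'k::field mpoly"
  assumes E: "coord_sys E" and F: "is_form d F"
    and h1: "d < 2 * Min ((\<lambda>i. e0 i + e1 i) ` support_in d E F)"
    and h2: "\<forall>i\<in>support_in d E F. e0 i + e1 i = Min ((\<lambda>i. e0 i + e1 i) ` support_in d E F) \<longrightarrow>
              Min ((\<lambda>i. e0 i + e1 i) ` support_in d E F) < 2 * e0 i"
  shows "cond_d d F (row E 0) (dual_pt E 2)"
proof -
  let ?S = "support_in d E F"
  let ?M = "Min ((\<lambda>i. e0 i + e1 i) ` ?S)"
  let ?S' = "{i\<in>?S. e0 i + e1 i = ?M}"
  let ?g = "dot (row E 2) (dual_pt E 2)"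
  have p: "dot (row E 0) (dual_pt E 2) = 0" "dot (row E 1) (dual_pt E 2) = 0" using dot_row_dual_pt[OF E] by auto
  note pm = point_mult_eq_Min[OF E F p dual_pt_nonzero[OF E]]
  have fin: "finite ?S'" using finite_support_in[of d E F] by simp
  obtain j where j: "j \<in> ?S" "?M = e0 j + e1 j"
    using finite_support_in[of d E F] support_in_nonempty[OF E F]
    by (metis (no_types, lifting) Min_in finite_imageI image_iff image_is_empty)
  then have ne: "?S' \<noteq> {}" by (metis (mono_tags, lifting) empty_iff mem_Collect_eq)
  define e where "e = Min (e0 ` ?S')"
  obtain j' where j': "j' \<in> ?S'" "e = e0 j'"
    unfolding e_def using fin ne by (metis (no_types, lifting) Min_in finite_imageI image_iff image_is_empty)
  have e2: "?M < 2 * e" using h2 j' by auto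
  have ele: "e \<le> e0 i" if "i \<in> ?S'" for i unfolding e_def using fin that by (auto intro: Min_le)
  have "(\<Sum>i\<in>?S'. Const (coord_coeff E F i * ?g ^ e2 i) * Xpow (e0 i, e1 i, 0)) =
        (\<Sum>i\<in>?S'. Const (coord_coeff E F i * ?g ^ e2 i) * (Var 0 ^ e * Xpow (e0 i - e, e1 i, 0)))"
    by (intro sum.cong refl) (simp add: Xpow_split0 ele)
  also have "\<dots> = Var 0 ^ e * (\<Sum>i\<in>?S'. Const (coord_coeff E F i * ?g ^ e2 i) * Xpow (e0 i - e, e1 i, 0))"
    by (simp add: sum_distrib_left ac_simps)
  finally have "tangent_cone (dual_pt E 2) F = lin (row E 0) ^ e * lin_subst E (\<Sum>i\<in>?S'. Const (coord_coeff E F i * ?g ^ e2 i) * Xpow (e0 i - e, e1 i, 0))"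
    unfolding pm(2) by (simp add: lin_subst_mult lin_subst_power lin_subst_Var)
  then have "lin (row E 0) ^ e dvd tangent_cone (dual_pt E 2) F" by (rule dvdI)
  then show ?thesis unfolding cond_d_def pm(1) using h1 e2 row_nonzero[OF E, of 0] dual_pt_nonzero[OF E] by auto
qed

lemma subst_id_lin: "subst id (comp p) (lin v) = dot v p"
  by (simp add: subst_lin[OF is_hom_id] dot_def algebra_simps)

lemma subst_pCons_lin: "subst (\<lambda>c. [:c:]) (\<lambda>j. [:comp p j, comp q j:]) (lin v) = [:dot v p, dot v q:]"
  by (simp add: subst_lin[OF is_hom_const_poly] dot_def algebra_simps)

definition row0_cofactor :: "nat \<Rightarrow> 'k::field coordsys \<Rightarrow> 'k mpoly \<Rightarrow> 'k mpoly" where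
  "row0_cofactor d E F = lin_subst E (\<Sum>i\<in>support_in d E F.
     Const (coord_coeff E F i) * Xpow (e0 i - Min (e0 ` support_in d E F), e1 i, e2 i))"

lemma inj_on_shift0:
  assumes "\<And>i. i \<in> S \<Longrightarrow> m \<le> e0 i"
  shows "inj_on (\<lambda>i. (e0 i - m, e1 i, e2 i)) S"
proof (rule inj_onI)
  fix a b assume a: "a \<in> S" and b: "b \<in> S" and eq: "(e0 a - m, e1 a, e2 a) = (e0 b - m, e1 b, e2 b)"
  then have "e0 a = e0 b" using assms[OF a] assms[OF b] by auto
  then show "a = b" using eq by (cases a, cases b) auto
qed

lemma form_eq_row0_power_mult_cofactor:
  fixes F :: "'k::field mpoly"
  assumes E: "coord_sys E" and F: "is_form d F"
  shows "F = lin (row E 0) ^ Min (e0 ` support_in d E F) * row0_cofactor d E F"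
proof -
  let ?S = "support_in d E F" and ?m = "Min (e0 ` support_in d E F)"
  have "F = lin_subst E (\<Sum>i\<in>?S. Const (coord_coeff E F i) * Xpow i)" by (rule form_expand[OF E F])
  also have "(\<Sum>i\<in>?S. Const (coord_coeff E F i) * Xpow i)
      = (\<Sum>i\<in>?S. Const (coord_coeff E F i) * (Var 0 ^ ?m * Xpow (e0 i - ?m, e1 i, e2 i)))"
  proof (intro sum.cong refl)
    fix i assume "i \<in> ?S"
    then have "?m \<le> e0 i" using finite_support_in[of d E F] by (auto intro: Min_le)
    then show "Const (coord_coeff E F i) * Xpow i
        = Const (coord_coeff E F i) * (Var 0 ^ ?m * Xpow (e0 i - ?m, e1 i, e2 i))"
      by (cases i) (simp add: Xpow_split0)
  qed
  also have "\<dots> = Var 0 ^ ?m * (\<Sum>i\<in>?S. Const (coord_coeff E F i) * Xpow (e0 i - ?m, e1 i, e2 i))"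
    by (simp add: sum_distrib_left ac_simps)
  finally show ?thesis unfolding row0_cofactor_def by (simp add: lin_subst_mult lin_subst_power lin_subst_Var)
qed

lemma row0_not_dvd_cofactor:
  fixes F :: "'k::field mpoly"
  assumes E: "coord_sys E" and F: "is_form d F"
  shows "\<not> lin (row E 0) dvd row0_cofactor d E F"
proof
  let ?S = "support_in d E F" and ?m = "Min (e0 ` support_in d E F)"
  let ?h = "\<lambda>i. (e0 i - ?m, e1 i, e2 i)"
  define G' where "G' = (\<Sum>i\<in>?S. Const (coord_coeff E F i) * Xpow (?h i))"
  assume "lin (row E 0) dvd row0_cofactor d E F"
  then obtain H where "lin_subst E G' = lin (row E 0) * H" by (auto simp: row0_cofactor_def G'_def elim: dvdE)
  then have "G' = Var 0 ^ 1 * in_coords E H" using in_coords_lin_subst[OF E, of G']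
    by (simp add: in_coords_mult in_coords_row0[OF E])
  then have "Var 0 ^ 1 dvd G'" by (rule dvdI)
  from Var_dvd_keys[OF this] have all: "\<forall>n\<in>Poly_Mapping.keys G'. 1 \<le> Poly_Mapping.lookup n 0" .
  obtain j0 where j0: "j0 \<in> ?S" "e0 j0 = ?m"
    using finite_support_in[of d E F] support_in_nonempty[OF E F]
    by (metis (no_types, lifting) Min_in finite_imageI image_iff image_is_empty)
  have inj: "inj_on ?h ?S" using finite_support_in[of d E F] by (intro inj_on_shift0) auto
  have "Poly_Mapping.lookup G' (expmon (?h j0)) = coord_coeff E F j0"
    unfolding G'_def by (rule lookup_sum_Xpow_inj[OF inj j0(1) finite_support_in[of d E F]])
  then have "expmon (?h j0) \<in> Poly_Mapping.keys G'" using j0(1) support_in_eq[OF E F] by (auto simp: in_keys_iff)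
  then show False using all j0 by (auto simp: lookup_expmon)
qed

lemma cofactor_vanishes_at_dual_pt:
  fixes F :: "'k::field mpoly"
  assumes E: "coord_sys E"
    and pos: "\<forall>i\<in>support_in d E F. e0 i = Min (e0 ` support_in d E F) \<longrightarrow> 0 < e1 i"
  shows "subst id (comp (dual_pt E 2)) (row0_cofactor d E F) = 0"
proof -
  let ?m = "Min (e0 ` support_in d E F)"
  have p: "dot (row E 0) (dual_pt E 2) = 0" "dot (row E 1) (dual_pt E 2) = 0" "dot (row E 2) (dual_pt E 2) = 1"
    using dot_row_dual_pt[OF E] by auto
  show ?thesis
    unfolding row0_cofactor_def subst_lin_subst_sum_Xpow[OF is_hom_id] subst_id_lin p
  proof (intro sum.neutral ballI)
    fix i assume i: "i \<in> support_in d E F"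
    have "?m \<le> e0 i" using finite_support_in[of d E F] i by (auto intro: Min_le)
    then show "id (coord_coeff E F i) * 0 ^ e0 (e0 i - ?m, e1 i, e2 i) * 0 ^ e1 (e0 i - ?m, e1 i, e2 i)
        * 1 ^ e2 (e0 i - ?m, e1 i, e2 i) = 0"
      using pos i by (cases "e0 i = ?m") auto
  qed
qed

lemma point_on_row0_not_dual_pt:
  fixes E :: "'k::field coordsys"
  assumes E: "coord_sys E"
  shows "\<exists>q. q \<noteq> (0, 0, 0) \<and> dot (row E 0) q = 0 \<and> \<not> proportional q (dual_pt E 2)"
proof (intro exI conjI)
  show "dual_pt E 1 \<noteq> (0, 0, 0)" by (rule dual_pt_nonzero[OF E])
  show "dot (row E 0) (dual_pt E 1) = 0" using dot_row_dual_pt[OF E] by simp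
  show "\<not> proportional (dual_pt E 1) (dual_pt E 2)"
  proof
    assume "proportional (dual_pt E 1) (dual_pt E 2)"
    then obtain c where "dot (row E 1) (dual_pt E 1) = c * dot (row E 1) (dual_pt E 2)"
      using proportional_dot[of "dual_pt E 1" "dual_pt E 2" "row E 1"] by (auto simp: dot_comm)
    then show False using dot_row_dual_pt[OF E, of 1] by simp
  qed
qed

lemma dot_row1_nonzero:
  fixes E :: "'k::field coordsys"
  assumes E: "coord_sys E" and q: "q \<noteq> (0, 0, 0)" "dot (row E 0) q = 0" "\<not> proportional q (dual_pt E 2)"
  shows "dot (row E 1) q \<noteq> 0"
proof
  assume b: "dot (row E 1) q = 0"
  have g: "dot (row E 2) q \<noteq> 0" using dual_dots_zero[OF E q(2) b] q(1) by blast
  have "q = (dot (row E 2) q * comp (dual_pt E 2) 0, dot (row E 2) q * comp (dual_pt E 2) 1,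
      dot (row E 2) q * comp (dual_pt E 2) 2)"
    using dual_dots_point[OF E q(2) b] by (simp add: vec_scale_def)
  then have "proportional q (dual_pt E 2)" using g unfolding proportional_def by blast
  then show False using q(3) by simp
qed

text \<open>On the line x0 = 0, parametrized as P + s q, a monomial x0^a x1^b x2^c restricts to
  (s dot x0 q)^a (s dot x1 q)^b (1 + s dot x2 q)^c, where dot x0 q = 0 and dot x1 q \<noteq> 0; so only the
  monomials of the cofactor with a = 0 survive, and the least b among them is the order of vanishing.\<close>

lemma int_mult_cofactor:
  fixes F :: "'k::field mpoly"
  assumes E: "coord_sys E" and F: "is_form d F"
  defines "S \<equiv> {i \<in> support_in d E F. e0 i = Min (e0 ` support_in d E F)}"
  shows "int_mult (row E 0) (dual_pt E 2) (row0_cofactor d E F) = Min (e1 ` S)"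
proof -
  let ?m = "Min (e0 ` support_in d E F)" and ?l = "row E 0" and ?p = "dual_pt E 2"
  let ?h = "\<lambda>i. (e0 i - ?m, e1 i, e2 i)"
  define q where "q = (SOME q. q \<noteq> (0, 0, 0) \<and> dot ?l q = 0 \<and> \<not> proportional q ?p)"
  have q: "q \<noteq> (0,0,0)" "dot ?l q = 0" "\<not> proportional q ?p"
    using someI_ex[OF point_on_row0_not_dual_pt[OF E]] unfolding q_def by auto
  define b where "b = dot (row E 1) q"
  have b: "b \<noteq> 0" unfolding b_def by (rule dot_row1_nonzero[OF E q])
  define f where "f = subst (\<lambda>c. [:c:]) (\<lambda>j. [:comp ?p j, comp q j:]) (row0_cofactor d E F)"
  define K where "K = Min (e1 ` S)"
  have fin: "finite (support_in d E F)" by (rule finite_support_in)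
  have mle: "?m \<le> e0 i" if "i \<in> support_in d E F" for i using fin that by (auto intro: Min_le)
  obtain j0 where "j0 \<in> support_in d E F" "e0 j0 = ?m"
    using fin support_in_nonempty[OF E F] by (metis (no_types, lifting) Min_in finite_imageI image_iff image_is_empty)
  then have "S \<noteq> {}" unfolding S_def by blast
  then have "K \<in> e1 ` S" unfolding K_def using fin by (intro Min_in) (auto simp: S_def)
  then obtain j where j: "j \<in> support_in d E F" "e0 j = ?m" "e1 j = K" unfolding S_def by auto
  have Kle: "K \<le> e1 i" if "i \<in> support_in d E F" "e0 i = ?m" for i
    unfolding K_def S_def using fin that by (auto intro: Min_le)
  have uniq: "i = j" if "i \<in> support_in d E F" "e0 i = ?m" "e1 i = K" for i
  proof -
    have "e2 i = e2 j" using support_in_exps[OF that(1)] support_in_exps[OF j(1)] that j by linarith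
    then show ?thesis using that j by (cases i, cases j) auto
  qed
  have p: "dot (row E 0) ?p = 0" "dot (row E 1) ?p = 0" "dot (row E 2) ?p = 1" using dot_row_dual_pt[OF E] by auto
  have coeff_f: "coeff f k = (\<Sum>i\<in>support_in d E F. if e0 (?h i) + e1 (?h i) \<le> k then
      coord_coeff E F i * dot ?l q ^ e0 (?h i) * b ^ e1 (?h i) *
      coeff ([:1, dot (row E 2) q:] ^ e2 (?h i)) (k - (e0 (?h i) + e1 (?h i))) else 0)" for k
    unfolding f_def row0_cofactor_def subst_lin_subst_sum_Xpow[OF is_hom_const_poly] subst_pCons_lin p b_def by (rule coeff_sum_pow3)
  have low: "coeff f k = 0" if "k < K" for k
    unfolding coeff_f
  proof (intro sum.neutral ballI)
    fix i assume i: "i \<in> support_in d E F"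
    show "(if e0 (?h i) + e1 (?h i) \<le> k then coord_coeff E F i * dot ?l q ^ e0 (?h i) * b ^ e1 (?h i) *
        coeff ([:1, dot (row E 2) q:] ^ e2 (?h i)) (k - (e0 (?h i) + e1 (?h i))) else 0) = 0"
      using Kle[OF i] mle[OF i] q(2) that by (cases "e0 i = ?m") auto
  qed
  have "coeff f K = (\<Sum>i\<in>support_in d E F. if i = j then coord_coeff E F j * b ^ K else 0)"
    unfolding coeff_f
  proof (intro sum.cong refl)
    fix i assume i: "i \<in> support_in d E F"
    consider "e0 i = ?m" "e1 i = K" | "e0 i = ?m" "K < e1 i" | "e0 i \<noteq> ?m"
      using Kle[OF i] by force
    then show "(if e0 (?h i) + e1 (?h i) \<le> K then coord_coeff E F i * dot ?l q ^ e0 (?h i) * b ^ e1 (?h i) *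
         coeff ([:1, dot (row E 2) q:] ^ e2 (?h i)) (K - (e0 (?h i) + e1 (?h i))) else 0) =
       (if i = j then coord_coeff E F j * b ^ K else 0)"
      by cases (use uniq[OF i] j mle[OF i] q(2) in \<open>auto simp: coeff_0_power\<close>)
  qed
  also have "\<dots> = coord_coeff E F j * b ^ K" using j(1) fin by simp
  finally have "coeff f K \<noteq> 0" using j(1) support_in_eq[OF E F] b by simp
  then have "(LEAST k. coeff f k \<noteq> 0) = K" using low by (intro Least_equality) (auto simp: not_less[symmetric])
  then show ?thesis unfolding int_mult_def Let_def q_def[symmetric] f_def K_def .
qed

lemma cond_c_flag:
  fixes F :: "'k::field mpoly"
  assumes E: "coord_sys E" and F: "is_form d F"
    and m0: "0 < Min (e0 ` support_in d E F)"
    and h: "\<forall>i\<in>support_in d E F. e0 i = Min (e0 ` support_in d E F) \<longrightarrow> d < 2 * e1 i + Min (e0 ` support_in d E F)"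
  shows "cond_c d F (row E 0) (dual_pt E 2)"
proof -
  let ?S = "support_in d E F" and ?m = "Min (e0 ` support_in d E F)"
  let ?T = "{i \<in> ?S. e0 i = ?m}"
  have fin: "finite ?T" using finite_support_in[of d E F] by simp
  have "0 < e1 i" if "i \<in> ?S" "e0 i = ?m" for i
    using support_in_exps[OF that(1)] h that by fastforce
  then have vanish: "subst id (comp (dual_pt E 2)) (row0_cofactor d E F) = 0"
    using cofactor_vanishes_at_dual_pt[OF E] by blast
  obtain j0 where "j0 \<in> ?S" "e0 j0 = ?m"
    using finite_support_in[of d E F] support_in_nonempty[OF E F]
    by (metis (no_types, lifting) Min_in finite_imageI image_iff image_is_empty)
  then have "?T \<noteq> {}" by blast
  then obtain j where j: "j \<in> ?T" "Min (e1 ` ?T) = e1 j"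
    using Min_in[OF finite_imageI[OF fin]] by (metis (no_types, lifting) image_iff image_is_empty)
  have "d < 2 * int_mult (row E 0) (dual_pt E 2) (row0_cofactor d E F) + ?m"
    unfolding int_mult_cofactor[OF E F] using j h by auto
  then show ?thesis unfolding cond_c_def
    using row_nonzero[OF E, of 0] dual_pt_nonzero[OF E] dot_row_dual_pt[OF E] m0 vanish
      form_eq_row0_power_mult_cofactor[OF E F] row0_not_dvd_cofactor[OF E F] by auto
qed

section \<open>Destabilizing weights on a support\<close>

lemma ordered_gaps_nonneg: "ordered w \<Longrightarrow> 0 \<le> fst w - fst (snd w) \<and> 0 \<le> fst (snd w) - snd (snd w)"
  by (cases w) (auto simp: ordered_def)

lemma three_pairing_eq:
  assumes "balanced w" "e0 i + e1 i + e2 i = d"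
  shows "3 * pairing i w = (fst w - fst (snd w)) * (3 * int (e0 i) - int d) + (fst (snd w) - snd (snd w)) * (int d - 3 * int (e2 i))"
proof -
  obtain a b c where w: "w = (a, b, c)" by (cases w) auto
  obtain x y z where i: "i = (x, y, z)" by (cases i) auto
  have hc: "c = - a - b" using assms unfolding w i balanced_def by auto
  have hd: "int d = int x + int y + int z" using assms unfolding w i by auto
  show ?thesis unfolding w i pairing_def by (simp add: hc hd algebra_simps)
qed

lemma destabilizing_gaps:
  assumes w: "balanced w" "ordered w" and pos: "\<forall>i\<in>S. 0 < pairing i w"
    and ex: "\<And>i. i \<in> S \<Longrightarrow> e0 i + e1 i + e2 i = d"
  obtains s t :: int where "0 \<le> s" "0 \<le> t"
    "\<And>i. i \<in> S \<Longrightarrow> 0 < s * (3 * int (e0 i) - int d) + t * (int d - 3 * int (e2 i))"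
proof
  show "0 \<le> fst w - fst (snd w)" "0 \<le> fst (snd w) - snd (snd w)" using ordered_gaps_nonneg[OF w(2)] by auto
  fix i assume i: "i \<in> S"
  show "0 < (fst w - fst (snd w)) * (3 * int (e0 i) - int d) + (fst (snd w) - snd (snd w)) * (int d - 3 * int (e2 i))"
    using three_pairing_eq[OF w(1) ex[OF i]] pos i by fastforce
qed

lemma pos_of_comb_nonpos_left:
  fixes s t x y :: int
  assumes "0 \<le> s" "0 \<le> t" "0 < s * x + t * y" "x \<le> 0"
  shows "0 < y" "0 < t"
proof -
  have "s * x \<le> 0" using assms by (simp add: mult_nonneg_nonpos)
  then have ty: "0 < t * y" using assms by linarith
  then show "0 < y" "0 < t" using assms(2) by (auto simp: zero_less_mult_iff)
qed

lemma pos_of_comb_nonpos_right: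
  fixes s t x y :: int
  assumes "0 \<le> s" "0 \<le> t" "0 < s * x + t * y" "y \<le> 0"
  shows "0 < x" "0 < s"
  using pos_of_comb_nonpos_left[of t s y x] assms by (auto simp: add.commute)

lemma gap_comb_cond_d_case:
  fixes S :: "(nat \<times> nat \<times> nat) set" and s t :: int
  assumes fin: "finite S" and ne: "S \<noteq> {}"
    and ex: "\<And>i. i \<in> S \<Longrightarrow> e0 i + e1 i + e2 i = d"
    and st: "0 \<le> s" "s \<le> t"
    and K: "\<And>i. i \<in> S \<Longrightarrow> 0 < s * (3 * int (e0 i) - int d) + t * (int d - 3 * int (e2 i))"
    and nb: "\<exists>i\<in>S. d \<le> 3 * e2 i"
  shows "d < 2 * Min ((\<lambda>i. e0 i + e1 i) ` S) \<and> (\<forall>i\<in>S. e0 i + e1 i = Min ((\<lambda>i. e0 i + e1 i) ` S) \<longrightarrow>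
              Min ((\<lambda>i. e0 i + e1 i) ` S) < 2 * e0 i)"
proof -
  define M where "M = Min ((\<lambda>i. e0 i + e1 i) ` S)"
  obtain i2 where i2: "i2 \<in> S" "d \<le> 3 * e2 i2" using nb by blast
  have half: "2 * e2 i < d" if i: "i \<in> S" for i
  proof (rule ccontr)
    assume "\<not> 2 * e2 i < d"
    then have a: "d \<le> 2 * e2 i" by simp
    define U where "U = 3 * int (e0 i) - int d"
    define V where "V = int d - 3 * int (e2 i)"
    have UV: "2 * U \<le> int d" "int d \<le> - 2 * V" using a ex[OF i] unfolding U_def V_def by simp_all
    have k: "0 < s * U + t * V" using K[OF i] unfolding U_def V_def .
    have "t * int d \<le> t * (- 2 * V)" using UV st by (intro mult_left_mono) auto
    moreover have "s * int d \<le> t * int d" using st by (intro mult_right_mono) auto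
    moreover have "s * (2 * U) \<le> s * int d" using UV st by (intro mult_left_mono) auto
    ultimately show False using k by (simp add: algebra_simps)
  qed
  obtain jm where jm: "jm \<in> S" "M = e0 jm + e1 jm"
    unfolding M_def using fin ne by (metis (no_types, lifting) Min_in finite_imageI image_iff image_is_empty)
  have Mle: "M \<le> e0 i + e1 i" if "i \<in> S" for i unfolding M_def using fin that by (auto intro: Min_le)
  have d1: "d < 2 * M" using half[OF jm(1)] ex[OF jm(1)] jm(2) by linarith
  have M23: "3 * M \<le> 2 * d" using Mle[OF i2(1)] ex[OF i2(1)] i2(2) by linarith
  have d2: "M < 2 * e0 i" if i: "i \<in> S" "e0 i + e1 i = M" for i
  proof (rule ccontr)
    assume "\<not> M < 2 * e0 i"
    then have a: "2 * e0 i \<le> M" by simp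
    define U where "U = 3 * int (e0 i) - int d"
    define V where "V = int d - 3 * int (e2 i)"
    have UV: "2 * U \<le> V" "V \<le> 0" using a ex[OF i(1)] i(2) M23 unfolding U_def V_def by simp_all
    have k: "0 < s * U + t * V" using K[OF i(1)] unfolding U_def V_def .
    have "s * (2 * U) \<le> s * V" using UV st by (intro mult_left_mono) auto
    moreover have "(s + 2 * t) * V \<le> 0" using UV st by (intro mult_nonneg_nonpos) auto
    ultimately show False using k by (simp add: algebra_simps)
  qed
  show ?thesis using d1 d2 unfolding M_def by blast
qed

lemma gap_comb_cond_c_case:
  fixes S :: "(nat \<times> nat \<times> nat) set" and s t :: int
  assumes fin: "finite S" and ne: "S \<noteq> {}" and dpos: "0 < d"
    and ex: "\<And>i. i \<in> S \<Longrightarrow> e0 i + e1 i + e2 i = d"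
    and st: "0 \<le> t" "t < s"
    and K: "\<And>i. i \<in> S \<Longrightarrow> 0 < s * (3 * int (e0 i) - int d) + t * (int d - 3 * int (e2 i))"
    and na: "\<exists>i\<in>S. 3 * e0 i \<le> d"
  shows "0 < Min (e0 ` S) \<and> (\<forall>i\<in>S. e0 i = Min (e0 ` S) \<longrightarrow> d < 2 * e1 i + Min (e0 ` S))"
proof -
  define m where "m = Min (e0 ` S)"
  obtain i1 where i1: "i1 \<in> S" "3 * e0 i1 \<le> d" using na by blast
  obtain jm where jm: "jm \<in> S" "m = e0 jm"
    unfolding m_def using fin ne by (metis (no_types, lifting) Min_in finite_imageI image_iff image_is_empty)
  have mle: "m \<le> e0 i" if "i \<in> S" for i unfolding m_def using fin that by (auto intro: Min_le)
  have m3: "3 * m \<le> d" using mle[OF i1(1)] i1(2) by linarith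
  have mpos: "0 < m"
  proof (rule ccontr)
    assume "\<not> 0 < m"
    then have e00: "e0 jm = 0" using jm by simp
    have k: "0 < s * (- int d) + t * (int d - 3 * int (e2 jm))" using K[OF jm(1)] e00 by simp
    have "t * (int d - 3 * int (e2 jm)) \<le> t * int d" using st by (intro mult_left_mono) auto
    then have "s * int d < t * int d" using k by (simp add: algebra_simps)
    then have "s < t" using dpos by (simp add: mult_less_cancel_right)
    then show False using st by simp
  qed
  have cc: "d < 2 * e1 i + m" if i: "i \<in> S" "e0 i = m" for i
  proof -
    define U where "U = 3 * int (e0 i) - int d"
    define V where "V = int d - 3 * int (e2 i)"
    have U0: "U \<le> 0" using m3 i(2) unfolding U_def by simp
    have k: "0 < s * U + t * V" using K[OF i(1)] unfolding U_def V_def .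
    have tpos: "0 < t" using pos_of_comb_nonpos_left(2)[OF _ st(1) k U0] st by simp
    have "t * (- U) \<le> s * (- U)" using st U0 by (intro mult_right_mono) auto
    then have "t * (- U) < t * V" using k by (simp add: algebra_simps)
    then have "- U < V" using tpos by (metis mult_less_cancel_left_pos)
    then have "e2 i < m" using i(2) unfolding U_def V_def by simp
    then show ?thesis using ex[OF i(1)] i(2) m3 by linarith
  qed
  show ?thesis using mpos cc unfolding m_def by blast
qed

lemma destabilizing_weight_cases:
  fixes S :: "(nat \<times> nat \<times> nat) set"
  assumes fin: "finite S" and ne: "S \<noteq> {}" and dpos: "0 < d"
    and ex: "\<And>i. i \<in> S \<Longrightarrow> e0 i + e1 i + e2 i = d"
    and w: "balanced w" "ordered w" and pos: "\<forall>i\<in>S. 0 < pairing i w"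
    and na: "\<exists>i\<in>S. 3 * e0 i \<le> d" and nb: "\<exists>i\<in>S. d \<le> 3 * e2 i"
  shows "(0 < Min (e0 ` S) \<and> (\<forall>i\<in>S. e0 i = Min (e0 ` S) \<longrightarrow> d < 2 * e1 i + Min (e0 ` S)))
       \<or> (d < 2 * Min ((\<lambda>i. e0 i + e1 i) ` S) \<and> (\<forall>i\<in>S. e0 i + e1 i = Min ((\<lambda>i. e0 i + e1 i) ` S) \<longrightarrow>
              Min ((\<lambda>i. e0 i + e1 i) ` S) < 2 * e0 i))"
proof -
  obtain s t where st: "0 \<le> s" "0 \<le> t"
    and K: "\<And>i. i \<in> S \<Longrightarrow> 0 < s * (3 * int (e0 i) - int d) + t * (int d - 3 * int (e2 i))"
    using destabilizing_gaps[OF w pos ex] by blast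
  show ?thesis
  proof (cases "s \<le> t")
    case True
    then show ?thesis using gap_comb_cond_d_case[OF fin ne ex st(1) True K nb] by blast
  next
    case False
    then show ?thesis using gap_comb_cond_c_case[OF fin ne dpos ex st(2) _ K na] by simp
  qed
qed

lemma mult_cross_less:
  fixes s t s' t' a b :: int
  assumes "s * a < t * b" "s' * b < t' * a" "0 < a" "0 < b" "0 \<le> s" "0 \<le> s'"
  shows "s * s' < t * t'"
proof -
  have "0 < t * b" using assms by (smt (verit) mult_nonneg_nonneg)
  have "(s * a) * (s' * b) < (t * b) * (t' * a)"
    by (rule mult_strict_mono) (use assms \<open>0 < t * b\<close> in auto)
  then have "(s * s') * (a * b) < (t * t') * (a * b)" by (simp add: ac_simps)
  moreover have "0 < a * b" using assms by simp
  ultimately show ?thesis by (simp add: mult_less_cancel_right)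
qed

lemma opposite_combs_contradict:
  fixes s t s' t' :: int and x z :: "'a \<Rightarrow> int"
  assumes st: "0 \<le> s" "0 \<le> t" "0 \<le> s'" "0 \<le> t'"
    and F: "\<And>i. i \<in> S \<Longrightarrow> 0 < s * x i + t * (- z i)"
    and G: "\<And>i. i \<in> S \<Longrightarrow> 0 < s' * z i + t' * (- x i)"
    and a: "a \<in> S" "x a \<le> 0" and b: "b \<in> S" "0 \<le> x b"
  shows False
proof -
  have za: "0 < - z a" using pos_of_comb_nonpos_left(1)[OF st(1,2) F[OF a(1)] a(2)] .
  have xa: "0 < - x a" using pos_of_comb_nonpos_left(1)[OF st(3,4) G[OF a(1)]] za by simp
  have "s * (- x a) < t * (- z a)" using F[OF a(1)] by (simp add: algebra_simps)
  moreover have "s' * (- z a) < t' * (- x a)" using G[OF a(1)] by (simp add: algebra_simps)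
  ultimately have lt: "s * s' < t * t'" using mult_cross_less xa za st(1,3) by blast
  have zb: "0 < z b" using pos_of_comb_nonpos_right(1)[OF st(3,4) G[OF b(1)]] b(2) by simp
  have xb: "0 < x b" using pos_of_comb_nonpos_right(1)[OF st(1,2) F[OF b(1)]] zb by simp
  have "t * z b < s * x b" using F[OF b(1)] by (simp add: algebra_simps)
  moreover have "t' * x b < s' * z b" using G[OF b(1)] by (simp add: algebra_simps)
  ultimately have "t * t' < s * s'" using mult_cross_less zb xb st(2,4) by blast
  then show False using lt by simp
qed

text \<open>The hypotheses on S say that (a) fails for the line x0 = 0 and (b) fails for the points
  x0 = x1 = 0 and x1 = x2 = 0.\<close>

lemma no_two_flags_destabilize:
  fixes S :: "(nat \<times> nat \<times> nat) set"
  assumes ex: "\<And>i. i \<in> S \<Longrightarrow> e0 i + e1 i + e2 i = d"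
    and a0: "\<exists>i\<in>S. 3 * e0 i \<le> d"
    and b0: "\<exists>i\<in>S. d \<le> 3 * e0 i"
    and b2: "\<exists>i\<in>S. d \<le> 3 * e2 i"
    and w: "balanced w" "ordered w" and pos: "\<forall>i\<in>S. 0 < pairing i w"
    and w': "balanced w'" "ordered w'"
    and pi: "\<pi> \<in> {sw12, sw01, sw12 \<circ> sw01, sw01 \<circ> sw12, sw01 \<circ> sw12 \<circ> sw01}"
    and pos': "\<forall>i\<in>S. 0 < pairing (\<pi> i) w'"
  shows False
proof -
  obtain s t where st1: "0 \<le> s" "0 \<le> t"
    and K: "\<And>i. i \<in> S \<Longrightarrow> 0 < s * (3 * int (e0 i) - int d) + t * (int d - 3 * int (e2 i))"
    using destabilizing_gaps[OF w pos ex] by blast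
  have pex: "e0 j + e1 j + e2 j = d" if j: "j \<in> \<pi> ` S" for j
  proof -
    obtain i where "i \<in> S" "j = \<pi> i" using j by blast
    then show ?thesis using pi ex[OF \<open>i \<in> S\<close>] by (auto simp: sw12_def sw01_def)
  qed
  have "\<forall>j\<in>\<pi> ` S. 0 < pairing j w'" using pos' by blast
  then obtain s' t' where st2: "0 \<le> s'" "0 \<le> t'"
    and K': "\<And>j. j \<in> \<pi> ` S \<Longrightarrow> 0 < s' * (3 * int (e0 j) - int d) + t' * (int d - 3 * int (e2 j))"
    using destabilizing_gaps[OF w'] pex by blast
  note st = st1 st2
  define u0 where "u0 i = 3 * int (e0 i) - int d" for i
  define u1 where "u1 i = 3 * int (e1 i) - int d" for i
  define u2 where "u2 i = 3 * int (e2 i) - int d" for i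
  have usum: "u0 i + u1 i + u2 i = 0" if "i \<in> S" for i
    using ex[OF that] unfolding u0_def u1_def u2_def by simp
  have F1: "0 < s * u0 i + t * (- u2 i)" if "i \<in> S" for i
    using K[OF that] unfolding u0_def u2_def by simp
  have F2: "0 < s' * (3 * int (e0 (\<pi> i)) - int d) + t' * (int d - 3 * int (e2 (\<pi> i)))" if "i \<in> S" for i
    using K'[OF imageI[OF that]] .
  obtain ia where ia: "ia \<in> S" "u0 ia \<le> 0" using a0 unfolding u0_def by force
  obtain ib where ib: "ib \<in> S" "0 \<le> u0 ib" using b0 unfolding u0_def by force
  obtain ic where ic: "ic \<in> S" "0 \<le> u2 ic" using b2 unfolding u2_def by force
  consider "\<pi> = sw12" | "\<pi> = sw01" | "\<pi> = sw12 \<circ> sw01" | "\<pi> = sw01 \<circ> sw12" | "\<pi> = sw01 \<circ> sw12 \<circ> sw01"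
    using pi by auto
  then show False
  proof cases
    case 1
    have G: "0 < s' * u0 i + t' * (- u1 i)" if "i \<in> S" for i
      using F2[OF that] unfolding 1 u0_def u1_def by (simp add: sw12_def)
    have "0 < - u2 ia" using pos_of_comb_nonpos_left(1)[OF st(1,2) F1[OF ia(1)] ia(2)] .
    moreover have "0 < - u1 ia" using pos_of_comb_nonpos_left(1)[OF st(3,4) G[OF ia(1)] ia(2)] .
    ultimately show False using usum[OF ia(1)] ia(2) by linarith
  next
    case 2
    have G: "0 < s' * u1 i + t' * (- u2 i)" if "i \<in> S" for i
      using F2[OF that] unfolding 2 u1_def u2_def by (simp add: sw01_def)
    have y: "- u2 ic \<le> 0" using ic by simp
    have "0 < u0 ic" using pos_of_comb_nonpos_right(1)[OF st(1,2) F1[OF ic(1)] y] .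
    moreover have "0 < u1 ic" using pos_of_comb_nonpos_right(1)[OF st(3,4) G[OF ic(1)] y] .
    ultimately show False using usum[OF ic(1)] ic(2) by linarith
  next
    case 3
    have G: "0 < s' * u1 i + t' * (- u0 i)" if "i \<in> S" for i
      using F2[OF that] unfolding 3 u1_def u0_def by (simp add: sw01_def sw12_def)
    have y: "- u2 ic \<le> 0" using ic by simp
    have "0 < u0 ic" using pos_of_comb_nonpos_right(1)[OF st(1,2) F1[OF ic(1)] y] .
    then have y': "- u0 ic \<le> 0" by simp
    have "0 < u1 ic" using pos_of_comb_nonpos_right(1)[OF st(3,4) G[OF ic(1)] y'] .
    then show False using usum[OF ic(1)] ic(2) \<open>0 < u0 ic\<close> by linarith
  next
    case 4
    have G: "0 < s' * u2 i + t' * (- u1 i)" if "i \<in> S" for i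
      using F2[OF that] unfolding 4 u2_def u1_def by (simp add: sw01_def sw12_def)
    have "0 < - u2 ia" using pos_of_comb_nonpos_left(1)[OF st(1,2) F1[OF ia(1)] ia(2)] .
    then have x: "u2 ia \<le> 0" by simp
    have "0 < - u1 ia" using pos_of_comb_nonpos_left(1)[OF st(3,4) G[OF ia(1)] x] .
    then show False using usum[OF ia(1)] ia(2) \<open>0 < - u2 ia\<close> by linarith
  next
    case 5
    have G: "0 < s' * u2 i + t' * (- u0 i)" if "i \<in> S" for i
      using F2[OF that] unfolding 5 u2_def u0_def by (simp add: sw01_def sw12_def)
    show False by (rule opposite_combs_contradict[OF st F1 G ia ib])
  qed
qed

section \<open>Relative position of two flags\<close>

lemma dot_cross_self1: "dot (cross a b) a = 0"
  by (simp add: dot_def cross_def algebra_simps)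
lemma dot_cross_self2: "dot (cross a b) b = 0"
  by (simp add: dot_def cross_def algebra_simps)

lemma dot_cross_cycle1: "dot (cross a2 a0) a1 = dot (cross a1 a2) a0"
  by (simp add: dot_def cross_def algebra_simps)
lemma dot_cross_cycle2: "dot (cross a0 a1) a2 = dot (cross a1 a2) a0"
  by (simp add: dot_def cross_def algebra_simps)

lemma cross_cross_eq_zero:
  assumes "dot l a = 0" "dot l b = 0"
  shows "cross l (cross a b) = (0, 0, 0)"
proof -
  have "cross l (cross a b) = (comp a 0 * dot l b - comp b 0 * dot l a, comp a 1 * dot l b - comp b 1 * dot l a,
      comp a 2 * dot l b - comp b 2 * dot l a)"
    by (simp add: cross_def dot_def algebra_simps)
  then show ?thesis using assms by simp
qed

lemma proportional_of_cross_zero: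
  fixes u v :: "'k::field vec3"
  assumes "cross u v = (0, 0, 0)" "v \<noteq> (0, 0, 0)" "u \<noteq> (0, 0, 0)"
  shows "proportional u v"
proof -
  obtain a b c where u: "u = (a, b, c)" by (cases u) auto
  obtain x y z where v: "v = (x, y, z)" by (cases v) auto
  have eqs: "b * z = c * y" "c * x = a * z" "a * y = b * x" using assms(1) unfolding u v cross_def by auto
  have nz: "x \<noteq> 0 \<or> y \<noteq> 0 \<or> z \<noteq> 0" using assms(2) unfolding v by auto
  have unz: "a \<noteq> 0 \<or> b \<noteq> 0 \<or> c \<noteq> 0" using assms(3) unfolding u by auto
  show ?thesis
  proof (cases "x \<noteq> 0")
    case True
    have ue: "u = (a / x * comp v 0, a / x * comp v 1, a / x * comp v 2)" unfolding u v using True eqs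
      by (auto simp: field_simps)
    moreover have "a / x \<noteq> 0" using True unz eqs unfolding u by (auto simp: field_simps)
    ultimately show ?thesis unfolding proportional_def by blast
  next
    case False
    show ?thesis
    proof (cases "y \<noteq> 0")
      case True
      have "u = (b / y * comp v 0, b / y * comp v 1, b / y * comp v 2)" unfolding u v using True False eqs
        by (auto simp: field_simps)
      moreover have "b / y \<noteq> 0" using True False unz eqs unfolding u by (auto simp: field_simps)
      ultimately show ?thesis unfolding proportional_def by blast
    next
      case False2: False
      then have zz: "z \<noteq> 0" using nz False by auto
      have "u = (c / z * comp v 0, c / z * comp v 1, c / z * comp v 2)" unfolding u v using zz False False2 eqs
        by (auto simp: field_simps)
      moreover have "c / z \<noteq> 0" using zz False False2 unz eqs unfolding u by (auto simp: field_simps)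
      ultimately show ?thesis unfolding proportional_def by blast
    qed
  qed
qed

lemma cross_zero_of_proportional: "proportional u v \<Longrightarrow> cross u v = (0, 0, 0)"
  by (auto simp: proportional_def cross_def algebra_simps)

lemma proportional_sym: "proportional u (v::'k::field vec3) \<Longrightarrow> proportional v u"
proof -
  assume "proportional u v"
  then obtain c where c: "c \<noteq> 0" "u = (c * comp v 0, c * comp v 1, c * comp v 2)" by (auto simp: proportional_def)
  then have "v = (inverse c * comp u 0, inverse c * comp u 1, inverse c * comp u 2)"
    by (cases v) auto
  then show "proportional v u" using c(1) unfolding proportional_def by (intro exI[of _ "inverse c"]) auto
qed

lemma proportional_trans: "proportional u (v::'k::field vec3) \<Longrightarrow> proportional v w \<Longrightarrow> proportional u w"
proof -
  assume "proportional u v" "proportional v w"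
  then obtain c c' where c: "c \<noteq> 0" "u = (c * comp v 0, c * comp v 1, c * comp v 2)"
    and c': "c' \<noteq> 0" "v = (c' * comp w 0, c' * comp w 1, c' * comp w 2)" by (auto simp: proportional_def)
  then have "u = ((c * c') * comp w 0, (c * c') * comp w 1, (c * c') * comp w 2)" by simp
  then show "proportional u w" using c c' unfolding proportional_def by (intro exI[of _ "c * c'"]) auto
qed

lemma proportional_dot_eq_0_right: "proportional u (v::'k::field vec3) \<Longrightarrow> dot x u = 0 \<longleftrightarrow> dot x v = 0"
  using proportional_dot_eq_0[of u v x] by (simp add: dot_comm)

lemma cross_proportional:
  fixes l a b :: "'k::field vec3"
  assumes "l \<noteq> (0, 0, 0)" "dot l a = 0" "dot l b = 0" "cross a b \<noteq> (0, 0, 0)"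
  shows "proportional (cross a b) l"
  by (rule proportional_of_cross_zero) (use cross_cross_eq_zero[OF assms(2,3)] assms in \<open>auto simp: cross_def algebra_simps\<close>)

lemma cross_eq_zero_commute: "cross a b = (0,0,0) \<longleftrightarrow> cross b a = ((0,0,0)::'k::comm_ring_1 vec3)"
  by (auto simp: cross_def algebra_simps)

lemma cross_nonzero:
  fixes u v :: "'k::field vec3"
  assumes "\<not> proportional u v" "u \<noteq> (0,0,0)" "v \<noteq> (0,0,0)"
  shows "cross u v \<noteq> (0,0,0)"
  using proportional_of_cross_zero[of u v] assms by auto

lemma proportional_cross_of_on_lines:
  fixes l l' v :: "'k::field vec3"
  assumes "\<not> proportional l' l" "l \<noteq> (0,0,0)" "l' \<noteq> (0,0,0)" "v \<noteq> (0,0,0)" "dot l v = 0" "dot l' v = 0"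
  shows "proportional v (cross l l')"
proof -
  have "cross l' l \<noteq> (0,0,0)" by (rule cross_nonzero[OF assms(1,3,2)])
  then have c: "cross l l' \<noteq> (0,0,0)" using cross_eq_zero_commute by blast
  have "proportional (cross l l') v"
    by (rule cross_proportional[OF assms(4)]) (use assms c in \<open>simp_all add: dot_comm\<close>)
  then show ?thesis by (rule proportional_sym)
qed

lemma another_point_on_line:
  fixes l v :: "'k::field vec3"
  assumes l: "l \<noteq> (0,0,0)" and v: "v \<noteq> (0,0,0)" "dot l v = 0"
  shows "\<exists>R. dot l R = 0 \<and> R \<noteq> (0,0,0) \<and> \<not> proportional R v"
proof -
  have "dot (1,0,0) v \<noteq> 0 \<or> dot (0,1,0) v \<noteq> 0 \<or> dot (0,0,1) v \<noteq> 0" using v(1) by (cases v) (auto simp: dot_def)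
  then obtain e where e: "dot e v \<noteq> 0" by blast
  have "cross (cross l e) v = (comp e 0 * dot l v - comp l 0 * dot e v, comp e 1 * dot l v - comp l 1 * dot e v,
      comp e 2 * dot l v - comp l 2 * dot e v)"
    by (simp add: cross_def dot_def algebra_simps)
  then have c: "cross (cross l e) v \<noteq> (0,0,0)" using l v(2) e by (cases l) auto
  have "cross l e \<noteq> (0,0,0)" using c by (auto simp: cross_def)
  moreover have "dot l (cross l e) = 0" using dot_cross_self1[of l e] by (simp add: dot_comm)
  moreover have "\<not> proportional (cross l e) v" using c cross_zero_of_proportional by blast
  ultimately show ?thesis by blast
qed

definition frame :: "'k::comm_ring_1 vec3 \<Rightarrow> 'k vec3 \<Rightarrow> 'k vec3 \<Rightarrow> 'k coordsys" where
  "frame a0 a1 a2 = (cross a1 a2, cross a2 a0, cross a0 a1)"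

lemma det3_frame: "det3 (frame a0 a1 a2) = dot (cross a1 a2) a0 ^ 2"
proof -
  obtain x0 x1 x2 where r0: "a0 = (x0, x1, x2)" by (cases a0) auto
  obtain y0 y1 y2 where r1: "a1 = (y0, y1, y2)" by (cases a1) auto
  obtain z0 z1 z2 where r2: "a2 = (z0, z1, z2)" by (cases a2) auto
  show ?thesis unfolding r0 r1 r2
    by (simp add: frame_def det3_def cross_def dot_def power2_eq_square algebra_simps)
qed

lemma coord_sys_frame:
  fixes a0 :: "'k::field vec3"
  shows "dot (cross a1 a2) a0 \<noteq> 0 \<Longrightarrow> coord_sys (frame a0 a1 a2)"
  by (simp add: coord_sys_def det3_frame)

lemma dot_cross_nonzero:
  fixes x :: "'k::field vec3"
  assumes "dot x a1 = 0" "dot x a2 = 0" "dot x a0 \<noteq> 0" "cross a1 a2 \<noteq> (0,0,0)"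
  shows "dot (cross a1 a2) a0 \<noteq> 0"
proof -
  have x0: "x \<noteq> (0,0,0)" using assms(3) by (auto simp: dot_def)
  have "proportional (cross a1 a2) x" by (rule cross_proportional[OF x0 assms(1,2,4)])
  then obtain c where "c \<noteq> 0" "dot (cross a1 a2) a0 = c * dot x a0" using proportional_dot by blast
  then show ?thesis using assms(3) by simp
qed

lemma cross_nonzero_of_dot: "dot (cross a1 a2) a0 \<noteq> 0 \<Longrightarrow> cross a1 a2 \<noteq> ((0,0,0)::'k::field vec3)"
  by (auto simp: dot_def)

lemma frame_adapted:
  fixes l :: "'k::field vec3"
  assumes "l \<noteq> (0,0,0)" "dot l a1 = 0" "dot l a2 = 0" "dot (cross a1 a2) a0 \<noteq> 0"
  shows "adapted (frame a0 a1 a2) l a2"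
  unfolding adapted_def frame_def
  using cross_proportional[OF assms(1-3) cross_nonzero_of_dot[OF assms(4)]] dot_cross_self2[of a1 a2] dot_cross_self1[of a2 a0]
  by simp

definition frame_rearrangements ::
    "(('k coordsys \<Rightarrow> 'k coordsys) \<times> (nat \<times> nat \<times> nat \<Rightarrow> nat \<times> nat \<times> nat)) set" where
  "frame_rearrangements = {(swap12, sw12), (swap01, sw01), (swap12 \<circ> swap01, sw12 \<circ> sw01),
     (swap01 \<circ> swap12, sw01 \<circ> sw12), (swap01 \<circ> swap12 \<circ> swap01, sw01 \<circ> sw12 \<circ> sw01)}"

lemma rearrangement_support:
  fixes F :: "'k::field mpoly"
  assumes "(\<Phi>, \<pi>) \<in> frame_rearrangements" "coord_sys E" "is_form d F"
  shows "coord_sys (\<Phi> E)" "support_in d (\<Phi> E) F = \<pi> ` support_in d E F"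
  using assms unfolding frame_rearrangements_def
  by (auto simp: coord_swap01 coord_swap12 support_swap01 support_swap12 image_comp)

lemma rearrangement_perm:
  "(\<Phi>, \<pi>) \<in> frame_rearrangements \<Longrightarrow> \<pi> \<in> {sw12, sw01, sw12 \<circ> sw01, sw01 \<circ> sw12, sw01 \<circ> sw12 \<circ> sw01}"
  unfolding frame_rearrangements_def by auto

text \<open>The five nontrivial relative positions of two flags (Bruhat decomposition); in each case
  the common basis is the dual of a frame of three points.\<close>

lemma flags_same_line:
  fixes l p l' p' :: "'k::field vec3"
  assumes l: "l \<noteq> (0,0,0)" and p: "p \<noteq> (0,0,0)" and lp: "dot l p = 0"
    and l': "l' \<noteq> (0,0,0)" and p': "p' \<noteq> (0,0,0)" and lp': "dot l' p' = 0"
    and ll: "proportional l' l" and np: "\<not> proportional p' p"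
  shows "\<exists>E. coord_sys E \<and> adapted E l p \<and> adapted (swap12 E) l' p'"
proof -
  have "dot l (1,0,0) \<noteq> 0 \<or> dot l (0,1,0) \<noteq> 0 \<or> dot l (0,0,1) \<noteq> 0" using l by (cases l) (auto simp: dot_def)
  then obtain R where R: "dot l R \<noteq> 0" by blast
  have lp'': "dot l p' = 0" using lp' proportional_dot_eq_0[OF ll] by simp
  have l'p: "dot l' p = 0" using lp proportional_dot_eq_0[OF ll] by simp
  have cr: "cross p' p \<noteq> (0,0,0)" by (rule cross_nonzero[OF np p' p])
  have D: "dot (cross p' p) R \<noteq> 0" by (rule dot_cross_nonzero[OF lp'' lp R cr])
  have "adapted (swap12 (frame R p' p)) l' p'"
    unfolding adapted_def swap12_def frame_def
    using cross_proportional[OF l' lp' l'p cr] dot_cross_self1[of p' p] dot_cross_self2[of R p'] by simp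
  then show ?thesis using coord_sys_frame[OF D] frame_adapted[OF l lp'' lp D] by blast
qed

lemma flags_same_point:
  fixes l p l' p' :: "'k::field vec3"
  assumes l: "l \<noteq> (0,0,0)" and p: "p \<noteq> (0,0,0)" and lp: "dot l p = 0"
    and l': "l' \<noteq> (0,0,0)" and lp': "dot l' p' = 0"
    and nl: "\<not> proportional l' l" and pp: "proportional p' p"
  shows "\<exists>E. coord_sys E \<and> adapted E l p \<and> adapted (swap01 E) l' p'"
proof -
  have l'p: "dot l' p = 0" using lp' proportional_dot_eq_0_right[OF pp] by simp
  obtain R1 where R1: "dot l R1 = 0" "R1 \<noteq> (0,0,0)" "\<not> proportional R1 p"
    using another_point_on_line[OF l p lp] by blast
  obtain R0 where R0: "dot l' R0 = 0" "R0 \<noteq> (0,0,0)" "\<not> proportional R0 p"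
    using another_point_on_line[OF l' p l'p] by blast
  have lR0: "dot l R0 \<noteq> 0"
  proof
    assume "dot l R0 = 0"
    then have "proportional R0 (cross l l')" using proportional_cross_of_on_lines[OF nl l l'] R0 by blast
    moreover have "proportional p (cross l l')" using proportional_cross_of_on_lines[OF nl l l' p lp l'p] .
    ultimately have "proportional R0 p" using proportional_trans proportional_sym by blast
    then show False using R0 by simp
  qed
  have cr: "cross R1 p \<noteq> (0,0,0)" by (rule cross_nonzero[OF R1(3) R1(2) p])
  have D: "dot (cross R1 p) R0 \<noteq> 0" by (rule dot_cross_nonzero[OF R1(1) lp lR0 cr])
  have D2: "dot (cross p R0) R1 \<noteq> 0" using D dot_cross_cycle1[of p R0 R1] by simp
  have "adapted (swap01 (frame R0 R1 p)) l' p'"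
    unfolding adapted_def swap01_def frame_def
    using cross_proportional[OF l' l'p R0(1) cross_nonzero_of_dot[OF D2]] dot_cross_self1[of p R0] dot_cross_self2[of R1 p]
      proportional_dot_eq_0_right[OF pp] by simp
  then show ?thesis using coord_sys_frame[OF D] frame_adapted[OF l R1(1) lp D] by blast
qed

lemma flags_point_on_other_line:
  fixes l p l' p' :: "'k::field vec3"
  assumes l: "l \<noteq> (0,0,0)" and p: "p \<noteq> (0,0,0)" and lp: "dot l p = 0"
    and l': "l' \<noteq> (0,0,0)" and p': "p' \<noteq> (0,0,0)" and lp': "dot l' p' = 0"
    and nl: "\<not> proportional l' l" and np: "\<not> proportional p' p" and l'p: "dot l' p = 0"
  shows "\<exists>E. coord_sys E \<and> adapted E l p \<and> adapted ((swap12 \<circ> swap01) E) l' p'"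
proof -
  obtain R where R: "dot l R = 0" "R \<noteq> (0,0,0)" "\<not> proportional R p"
    using another_point_on_line[OF l p lp] by blast
  have lp'': "dot l p' \<noteq> 0"
  proof
    assume "dot l p' = 0"
    then have "proportional p' (cross l l')" using proportional_cross_of_on_lines[OF nl l l' p'] lp' by blast
    moreover have "proportional p (cross l l')" using proportional_cross_of_on_lines[OF nl l l' p lp l'p] .
    ultimately have "proportional p' p" using proportional_trans proportional_sym by blast
    then show False using np by simp
  qed
  have cr: "cross R p \<noteq> (0,0,0)" by (rule cross_nonzero[OF R(3) R(2) p])
  have D: "dot (cross R p) p' \<noteq> 0" by (rule dot_cross_nonzero[OF R(1) lp lp'' cr])
  have D2: "dot (cross p p') R \<noteq> 0" using D dot_cross_cycle1[of p p' R] by simp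
  have "adapted ((swap12 \<circ> swap01) (frame p' R p)) l' p'"
    unfolding adapted_def swap01_def swap12_def frame_def comp_def
    using cross_proportional[OF l' l'p lp' cross_nonzero_of_dot[OF D2]] dot_cross_self2[of p p'] dot_cross_self1[of p' R] by simp
  then show ?thesis using coord_sys_frame[OF D] frame_adapted[OF l R(1) lp D] by blast
qed

lemma flags_other_point_on_line:
  fixes l p l' p' :: "'k::field vec3"
  assumes l: "l \<noteq> (0,0,0)" and p: "p \<noteq> (0,0,0)" and lp: "dot l p = 0"
    and l': "l' \<noteq> (0,0,0)" and p': "p' \<noteq> (0,0,0)" and lp': "dot l' p' = 0"
    and nl: "\<not> proportional l' l" and np: "\<not> proportional p' p" and lp'': "dot l p' = 0"
  shows "\<exists>E. coord_sys E \<and> adapted E l p \<and> adapted ((swap01 \<circ> swap12) E) l' p'"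
proof -
  obtain R where R: "dot l' R = 0" "R \<noteq> (0,0,0)" "\<not> proportional R p'"
    using another_point_on_line[OF l' p' lp'] by blast
  have lR: "dot l R \<noteq> 0"
  proof
    assume "dot l R = 0"
    then have "proportional R (cross l l')" using proportional_cross_of_on_lines[OF nl l l'] R by blast
    moreover have "proportional p' (cross l l')" using proportional_cross_of_on_lines[OF nl l l' p' lp'' lp'] .
    ultimately have "proportional R p'" using proportional_trans proportional_sym by blast
    then show False using R by simp
  qed
  have cr: "cross p' p \<noteq> (0,0,0)" by (rule cross_nonzero[OF np p' p])
  have D: "dot (cross p' p) R \<noteq> 0" by (rule dot_cross_nonzero[OF lp'' lp lR cr])
  have D2: "dot (cross R p') p \<noteq> 0" using D dot_cross_cycle2[of R p' p] by simp
  have "adapted ((swap01 \<circ> swap12) (frame R p' p)) l' p'"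
    unfolding adapted_def swap01_def swap12_def frame_def comp_def
    using cross_proportional[OF l' R(1) lp' cross_nonzero_of_dot[OF D2]] dot_cross_self2[of R p'] dot_cross_self1[of p' p] by simp
  then show ?thesis using coord_sys_frame[OF D] frame_adapted[OF l lp'' lp D] by blast
qed

lemma flags_general_position:
  fixes l p l' p' :: "'k::field vec3"
  assumes l: "l \<noteq> (0,0,0)" and p: "p \<noteq> (0,0,0)" and lp: "dot l p = 0"
    and l': "l' \<noteq> (0,0,0)" and lp': "dot l' p' = 0"
    and nl: "\<not> proportional l' l" and l'p: "dot l' p \<noteq> 0" and lp'': "dot l p' \<noteq> 0"
  shows "\<exists>E. coord_sys E \<and> adapted E l p \<and> adapted ((swap01 \<circ> swap12 \<circ> swap01) E) l' p'"
proof -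
  let ?Q = "cross l l'"
  have Q: "?Q \<noteq> (0,0,0)" using cross_nonzero[OF nl l' l] cross_eq_zero_commute by blast
  have lQ: "dot l ?Q = 0" using dot_cross_self1[of l l'] by (simp add: dot_comm)
  have l'Q: "dot l' ?Q = 0" using dot_cross_self2[of l l'] by (simp add: dot_comm)
  have nQp: "\<not> proportional ?Q p"
  proof
    assume "proportional ?Q p"
    then have "dot l' p = 0" using l'Q proportional_dot_eq_0_right proportional_sym by blast
    then show False using l'p by simp
  qed
  have cr: "cross ?Q p \<noteq> (0,0,0)" by (rule cross_nonzero[OF nQp Q p])
  have D: "dot (cross ?Q p) p' \<noteq> 0" by (rule dot_cross_nonzero[OF lQ lp lp'' cr])
  have D2: "dot (cross p' ?Q) p \<noteq> 0" using D dot_cross_cycle2[of p' ?Q p] by simp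
  have "adapted ((swap01 \<circ> swap12 \<circ> swap01) (frame p' ?Q p)) l' p'"
    unfolding adapted_def swap01_def swap12_def frame_def comp_def
    using cross_proportional[OF l' lp' l'Q cross_nonzero_of_dot[OF D2]] dot_cross_self1[of p' ?Q] dot_cross_self2[of p p'] by simp
  then show ?thesis using coord_sys_frame[OF D] frame_adapted[OF l lQ lp D] by blast
qed

lemma relative_position_flags:
  fixes l p l' p' :: "'k::field vec3"
  assumes l: "l \<noteq> (0,0,0)" and p: "p \<noteq> (0,0,0)" and lp: "dot l p = 0"
    and l': "l' \<noteq> (0,0,0)" and p': "p' \<noteq> (0,0,0)" and lp': "dot l' p' = 0"
    and diff: "\<not> (proportional l' l \<and> proportional p' p)"
  obtains E \<Phi> \<pi> where "coord_sys E" "adapted E l p" "(\<Phi>, \<pi>) \<in> frame_rearrangements" "adapted (\<Phi> E) l' p'"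
proof -
  have "\<exists>E \<Phi> \<pi>. coord_sys E \<and> adapted E l p \<and> (\<Phi>, \<pi>) \<in> frame_rearrangements \<and> adapted (\<Phi> E) l' p'"
  proof (cases "proportional l' l")
    case True
    then show ?thesis using flags_same_line[OF assms(1-6) True] diff
      unfolding frame_rearrangements_def by blast
  next
    case nl: False
    consider "proportional p' p" | "\<not> proportional p' p" "dot l' p = 0"
      | "\<not> proportional p' p" "dot l' p \<noteq> 0" "dot l p' = 0" | "dot l' p \<noteq> 0" "dot l p' \<noteq> 0"
      by blast
    then show ?thesis
    proof cases
      case 1
      then show ?thesis using flags_same_point[OF l p lp l' lp' nl]
        unfolding frame_rearrangements_def by blast
    next
      case 2
      then show ?thesis using flags_point_on_other_line[OF assms(1-6) nl]
        unfolding frame_rearrangements_def by blast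
    next
      case 3
      then show ?thesis using flags_other_point_on_line[OF assms(1-6) nl]
        unfolding frame_rearrangements_def by blast
    next
      case 4
      then show ?thesis using flags_general_position[OF l p lp l' lp' nl]
        unfolding frame_rearrangements_def by blast
    qed
  qed
  then show ?thesis using that by blast
qed

lemma flag_of_coord_sys:
  fixes E :: "'k::field coordsys"
  assumes "coord_sys E"
  shows "row E 0 \<noteq> (0, 0, 0)" "dual_pt E 2 \<noteq> (0, 0, 0)" "dot (row E 0) (dual_pt E 2) = 0"
    "adapted E (row E 0) (dual_pt E 2)"
  using row_nonzero[OF assms, of 0] dual_pt_nonzero[OF assms]
    dot_row_dual_pt[OF assms, of 0 2] dot_row_dual_pt[OF assms, of 1 2]
  by (simp_all add: adapted_def proportional_refl row0 row1_Suc)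

lemma instability_conditions:
  fixes F :: "'k::field mpoly"
  assumes E: "coord_sys E" and F: "is_form d F" and d: "0 < d" and inst: "instability d F E w"
  shows "cond_a d F (row E 0) \<or> cond_b d F (dual_pt E 2) \<or> cond_c d F (row E 0) (dual_pt E 2) \<or> cond_d d F (row E 0) (dual_pt E 2)"
proof -
  have w: "balanced w" "ordered w" "\<forall>i\<in>support_in d E F. 0 < pairing i w" using inst by (auto simp: instability_def)
  consider "\<forall>i\<in>support_in d E F. d < 3 * e0 i" | "\<forall>i\<in>support_in d E F. 3 * e2 i < d"
    | "\<exists>i\<in>support_in d E F. 3 * e0 i \<le> d" "\<exists>i\<in>support_in d E F. d \<le> 3 * e2 i"
    by (meson not_le)
  then show ?thesis
  proof cases
    case 3
    from destabilizing_weight_cases[OF finite_support_in support_in_nonempty[OF E F] d support_in_exps[where E=E and F=F] w 3]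
    show ?thesis using cond_c_flag[OF E F] cond_d_flag[OF E F] by blast
  qed (use cond_a_row0[OF E F] cond_b_dual_pt[OF E F] in blast)+
qed

lemma cond_a_instability:
  fixes F :: "'k::field mpoly"
  assumes F: "is_form d F" and a: "cond_a d F l" and E: "coord_sys E" "proportional (fst E) l"
  shows "instability d F E (2, -1, -1)"
proof -
  have "0 < pairing i (2, -1, -1)" if i: "i \<in> support_in d E F" for i
  proof -
    have "d < 3 * e0 i" using cond_a_support[OF E(1) F a] E(2) i by (simp add: row0)
    then show ?thesis using support_in_exps[OF i] by (cases i) (simp add: pairing_def)
  qed
  then show ?thesis using E(1) by (simp add: instability_def balanced_def ordered_def)
qed

lemma cond_b_instability:
  fixes F :: "'k::field mpoly"
  assumes F: "is_form d F" and b: "cond_b d F p"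
    and E: "coord_sys E" "dot (fst E) p = 0" "dot (fst (snd E)) p = 0"
  shows "instability d F E (1, 1, -2)"
proof -
  have "0 < pairing i (1, 1, -2)" if i: "i \<in> support_in d E F" for i
  proof -
    have "3 * e2 i < d" using cond_b_support[OF E(1) F b] E(2,3) i by (simp add: row0 row1_Suc)
    then show ?thesis using support_in_exps[OF i] by (cases i) (simp add: pairing_def)
  qed
  then show ?thesis using E(1) by (simp add: instability_def balanced_def ordered_def)
qed

lemma support_without_cond_ab:
  fixes F :: "'k::field mpoly"
  assumes E: "coord_sys E" and F: "is_form d F"
    and na: "\<not> (\<exists>l. cond_a d F l)" and nb: "\<not> (\<exists>p. cond_b d F p)"
  shows "\<exists>i\<in>support_in d E F. 3 * e0 i \<le> d" "\<exists>i\<in>support_in d E F. d \<le> 3 * e0 i"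
    "\<exists>i\<in>support_in d E F. d \<le> 3 * e2 i"
proof -
  show "\<exists>i\<in>support_in d E F. 3 * e0 i \<le> d" using cond_a_row0[OF E F] na by (meson not_le)
  show "\<exists>i\<in>support_in d E F. d \<le> 3 * e2 i" using cond_b_dual_pt[OF E F] nb by (meson not_le)
  have r: "(swap12 \<circ> swap01, sw12 \<circ> sw01) \<in> frame_rearrangements" by (simp add: frame_rearrangements_def)
  have "\<not> (\<forall>i\<in>support_in d ((swap12 \<circ> swap01) E) F. 3 * e2 i < d)"
    using cond_b_dual_pt[OF rearrangement_support(1)[OF r E F] F] nb by blast
  then show "\<exists>i\<in>support_in d E F. d \<le> 3 * e0 i"
    unfolding rearrangement_support(2)[OF r E F] by (auto simp: sw01_def sw12_def not_less)
qed

lemma destabilized_flag_unique: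
  fixes F :: "'k::field mpoly"
  assumes F: "is_form d F" and nab: "\<not> (\<exists>l. cond_a d F l)" "\<not> (\<exists>p. cond_b d F p)"
    and flag: "l \<noteq> (0,0,0)" "p \<noteq> (0,0,0)" "dot l p = 0"
    and flag': "l' \<noteq> (0,0,0)" "p' \<noteq> (0,0,0)" "dot l' p' = 0"
    and destab: "\<forall>E. coord_sys E \<and> adapted E l p \<longrightarrow> (\<exists>w. instability d F E w)"
    and destab': "\<forall>E. coord_sys E \<and> adapted E l' p' \<longrightarrow> (\<exists>w. instability d F E w)"
  shows "proportional l' l \<and> proportional p' p"
proof (rule ccontr)
  assume "\<not> ?thesis"
  then obtain E \<Phi> \<pi> where E: "coord_sys E" "adapted E l p"
    and r: "(\<Phi>, \<pi>) \<in> frame_rearrangements" "adapted (\<Phi> E) l' p'"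
    using relative_position_flags[OF flag flag'] by blast
  obtain w where w: "instability d F E w" using destab E by blast
  obtain w' where w': "instability d F (\<Phi> E) w'" using destab' rearrangement_support(1)[OF r(1) E(1) F] r(2) by blast
  have w_pos: "balanced w" "ordered w" "\<forall>i\<in>support_in d E F. 0 < pairing i w"
    using w by (simp_all add: instability_def)
  have w'_pos: "balanced w'" "ordered w'" "\<forall>i\<in>support_in d E F. 0 < pairing (\<pi> i) w'"
    using w' unfolding rearrangement_support(2)[OF r(1) E(1) F] instability_def by simp_all
  show False
    by (rule no_two_flags_destabilize[OF support_in_exps[where E=E and F=F] support_without_cond_ab[OF E(1) F nab]
          w_pos w'_pos(1,2) rearrangement_perm[OF r(1)] w'_pos(3)])
qed

definition destabilizing_flag :: "nat \<Rightarrow> 'k::field mpoly \<Rightarrow> 'k vec3 \<Rightarrow> 'k vec3 \<Rightarrow> bool" where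
  "destabilizing_flag d F l p \<longleftrightarrow> l \<noteq> (0, 0, 0) \<and> p \<noteq> (0, 0, 0) \<and> dot l p = 0 \<and>
     (cond_c d F l p \<or> cond_d d F l p) \<and> (\<forall>E. coord_sys E \<and> adapted E l p \<longrightarrow> (\<exists>w. instability d F E w))"

lemma unique_destabilizing_flag:
  fixes F :: "'k::field mpoly"
  assumes F: "is_form d F" and d: "0 < d" and inst: "instability d F E w"
    and nab: "\<not> (\<exists>l. cond_a d F l)" "\<not> (\<exists>p. cond_b d F p)"
  shows "\<exists>l p. destabilizing_flag d F l p \<and>
    (\<forall>l' p'. destabilizing_flag d F l' p' \<longrightarrow> proportional l' l \<and> proportional p' p)"
proof -
  have E: "coord_sys E" using inst by (simp add: instability_def)
  note flag = flag_of_coord_sys[OF E]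
  have destab: "\<forall>E'. coord_sys E' \<and> adapted E' (row E 0) (dual_pt E 2) \<longrightarrow> (\<exists>w. instability d F E' w)"
    using instability_same_flag[OF F E flag(4) _ _ flag(2) inst] by blast
  have "cond_c d F (row E 0) (dual_pt E 2) \<or> cond_d d F (row E 0) (dual_pt E 2)"
    using instability_conditions[OF E F d inst] nab by blast
  then have "destabilizing_flag d F (row E 0) (dual_pt E 2)"
    using flag destab by (simp add: destabilizing_flag_def)
  moreover have "proportional l' (row E 0) \<and> proportional p' (dual_pt E 2)"
    if "destabilizing_flag d F l' p'" for l' p'
    using destabilized_flag_unique[OF F nab flag(1-3) _ _ _ destab] that
    unfolding destabilizing_flag_def by blast
  ultimately show ?thesis by blast
qed

theorem proposition2p6:
  fixes F :: "'k::field mpoly" and d :: nat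
  assumes perfect: "perfect_field TYPE('k)"
    and form: "is_form d F"
    and deg: "d \<ge> 3"
    and unstable: "\<not> semistable d F"
  shows
    "((\<exists>l. cond_a d F l) \<or> (\<exists>p. cond_b d F p) \<or>
      (\<exists>l p. cond_c d F l p) \<or> (\<exists>l p. cond_d d F l p))
   \<and> (\<forall>l E. cond_a d F l \<and> coord_sys E \<and> proportional (fst E) l
        \<longrightarrow> instability d F E (2, -1, -1))
   \<and> (\<forall>p E. cond_b d F p \<and> coord_sys E \<and> dot (fst E) p = 0 \<and> dot (fst (snd E)) p = 0
        \<longrightarrow> instability d F E (1, 1, -2))
   \<and> ((\<not> (\<exists>l. cond_a d F l) \<and> \<not> (\<exists>p. cond_b d F p)) \<longrightarrow>
      (\<exists>l p. l \<noteq> (0, 0, 0) \<and> p \<noteq> (0, 0, 0) \<and> dot l p = 0 \<and> (cond_c d F l p \<or> cond_d d F l p) \<and>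
         (\<forall>E. coord_sys E \<and> proportional (fst E) l \<and> dot (fst E) p = 0 \<and> dot (fst (snd E)) p = 0
              \<longrightarrow> (\<exists>w. instability d F E w)) \<and>
         (\<forall>l' p'. l' \<noteq> (0, 0, 0) \<and> p' \<noteq> (0, 0, 0) \<and> dot l' p' = 0 \<and> (cond_c d F l' p' \<or> cond_d d F l' p') \<and>
            (\<forall>E. coord_sys E \<and> proportional (fst E) l' \<and> dot (fst E) p' = 0 \<and> dot (fst (snd E)) p' = 0
                 \<longrightarrow> (\<exists>w. instability d F E w))
            \<longrightarrow> proportional l' l \<and> proportional p' p)))"
proof -
  obtain E w where inst: "instability d F E w" using unstable by (auto simp: semistable_def)
  have E: "coord_sys E" using inst by (simp add: instability_def)
  have d: "0 < d" using deg by simp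
  have "(\<exists>l. cond_a d F l) \<or> (\<exists>p. cond_b d F p) \<or> (\<exists>l p. cond_c d F l p) \<or> (\<exists>l p. cond_d d F l p)"
    using instability_conditions[OF E form d inst] by blast
  then show ?thesis
    using cond_a_instability[OF form] cond_b_instability[OF form] unique_destabilizing_flag[OF form d inst]
    unfolding destabilizing_flag_def adapted_def conj_assoc by blast
qed

end
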